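(* Let $v_1,v_2,v_3\in\mathbb R^2$ be primitive integral vectors spanning $\mathbb R^2$ with $v_1+v_2+v_3=0$. Let $T^2=\mathbb R^2/\mathbb Z^2$ and for $j=1,2,3$ let $G_j\cong S^1\subset T^2$ be the subgroup covered by $\mathbb R v_j$, oriented by $v_j$. Let $V^1\subset\mathbb R^2$ be the tropical line (the non-smooth locus of $\max\{x_1,x_2,0\}$), with vertex $p=(0,0)$ and edges $D_1,D_2,D_3$ emanating from $p$, indexed in anticlockwise order. Let $X=\mathbb R^2\times T^2$ and $\Sigma_0=\bigcup_{j=1}^3 D_j\times G_j$. Then there exists $Q\subset\{p\}\times T^2$ such that $\Sigma=\Sigma_0\cup Q$ is an embedded piecewise smooth submanifold of $X$. *)

theory Defs
  imports "HOL-Analysis.Analysis"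
begin

definition integral_vec :: "real^2 \<Rightarrow> bool" where
  "integral_vec v \<longleftrightarrow> (\<forall>i. v $ i \<in> \<int>)"

definition primitive_vec :: "real^2 \<Rightarrow> bool" where
  "primitive_vec v \<longleftrightarrow> integral_vec v \<and>
     (\<forall>w (k::nat). integral_vec w \<and> v = real k *\<^sub>R w \<longrightarrow> k = 1)"

definition torus_map :: "real^2 \<Rightarrow> complex \<times> complex" where
  "torus_map x = (cis (2 * pi * x $ 1), cis (2 * pi * x $ 2))"

definition torus :: "(complex \<times> complex) set" where
  "torus = range torus_map"

definition circle_subgroup :: "real^2 \<Rightarrow> (complex \<times> complex) set" where
  "circle_subgroup v = torus_map ` {t *\<^sub>R v | t. True}"

definition trop_line :: "(real^2) set" where
  "trop_line = {x. (x$1 = x$2 \<and> x$2 \<ge> 0) \<or> (x$1 = 0 \<and> x$2 \<le> 0) \<or> (x$2 = 0 \<and> x$1 \<le> 0)}"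

definition ray :: "real^2 \<Rightarrow> (real^2) set" where
  "ray d = {t *\<^sub>R d | t. t \<ge> 0}"

text \<open>Edges of the tropical line in anticlockwise order (directions at 45, 180, 270 degrees).\<close>
definition edge1 :: "(real^2) set" where "edge1 = ray (vector [1, 1])"
definition edge2 :: "(real^2) set" where "edge2 = ray (vector [-1, 0])"
definition edge3 :: "(real^2) set" where "edge3 = ray (vector [0, -1])"


lemma trop_line_edges: "trop_line = edge1 \<union> edge2 \<union> edge3"
proof (intro equalityI subsetI)
  fix x :: "real^2" assume "x \<in> trop_line"
  then consider "x$1 = x$2" "x$2 \<ge> 0" | "x$1 = 0" "x$2 \<le> 0" | "x$2 = 0" "x$1 \<le> 0"
    unfolding trop_line_def by auto
  then show "x \<in> edge1 \<union> edge2 \<union> edge3"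
  proof cases
    case 1 then have "x = x$2 *\<^sub>R vector [1,1]" by (simp add: vec_eq_iff forall_2)
    with 1 show ?thesis unfolding edge1_def ray_def by blast
  next
    case 2 then have "x = (- x$2) *\<^sub>R vector [0,-1]" by (simp add: vec_eq_iff forall_2)
    with 2 show ?thesis unfolding edge3_def ray_def by (metis (mono_tags, lifting) UnI2 mem_Collect_eq neg_0_le_iff_le)
  next
    case 3 then have "x = (- x$1) *\<^sub>R vector [-1,0]" by (simp add: vec_eq_iff forall_2)
    with 3 show ?thesis unfolding edge2_def ray_def by (metis (mono_tags, lifting) UnI1 UnI2 mem_Collect_eq neg_0_le_iff_le)
  qed
next
  fix x :: "real^2" assume "x \<in> edge1 \<union> edge2 \<union> edge3"
  then show "x \<in> trop_line"
    unfolding edge1_def edge2_def edge3_def ray_def trop_line_def by auto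
qed

fun dderiv :: "'a::real_normed_vector list \<Rightarrow> ('a \<Rightarrow> 'b::real_normed_vector) \<Rightarrow> 'a \<Rightarrow> 'b" where
  "dderiv [] f = f"
| "dderiv (e # es) f = (\<lambda>x. frechet_derivative (dderiv es f) (at x) e)"

definition smooth_on :: "'a::euclidean_space set \<Rightarrow> ('a \<Rightarrow> 'b::real_normed_vector) \<Rightarrow> bool" where
  "smooth_on U f \<longleftrightarrow> (\<forall>es. set es \<subseteq> Basis \<longrightarrow> dderiv es f differentiable_on U)"

text \<open>S is an embedded piecewise smooth surface: every point has a neighbourhood N, open in S,
  homeomorphic to an open set W of R^2 via a chart phi which is piecewise smooth, i.e. W is
  covered by finitely many convex polygons on each of which phi agrees with a smooth
  immersion defined on an open neighbourhood of the piece.\<close>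
definition pw_smooth_surface :: "'b::euclidean_space set \<Rightarrow> bool" where
  "pw_smooth_surface S \<longleftrightarrow>
    (\<forall>x\<in>S. \<exists>(W::(real^2) set) N \<phi> \<phi>' P.
        open W \<and> x \<in> N \<and> openin (top_of_set S) N \<and> homeomorphism W N \<phi> \<phi>' \<and>
        finite P \<and> (\<forall>C\<in>P. polytope C) \<and> W \<subseteq> \<Union>P \<and>
        (\<forall>C\<in>P. \<exists>V \<psi>. open V \<and> C \<inter> W \<subseteq> V \<and> smooth_on V \<psi> \<and>
             (\<forall>y\<in>C \<inter> W. inj (frechet_derivative \<psi> (at y)) \<and> \<phi> y = \<psi> y)))"

end

theory Submission
  imports Defs
begin

text \<open>Use coordinates w on the universal cover of T^2 in which y = (w$1 v1 + w$2 v2) / det(v1, v2).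
  The circles G1, G2, G3 then lift to the lines w$2 \<in> \<int>, w$1 \<in> \<int>, w$1 - w$2 \<in> \<int>, which cut the
  w-plane into triangles, and Q is the image of every second triangle, frac (w$2) \<le> frac (w$1).
  The preimage of \<Sigma> in R^2 \<times> R^2 is invariant under integral translations of w, and near each of its
  points it is the image of an injective map that is linear on the wedges of a finite fan: a plane
  inside a triangle, a product of two lines along an edge Dj \<times> Gj, a plane with a half-plane
  attached over a side of a triangle, and over a vertex of the triangles a fan of nine wedges in which
  the three sectors of Q alternate with the three half-planes Dj \<times> Gj. The covering map
  R^2 \<times> R^2 \<rightarrow> X is injective on sets that are small in the w-direction, so composing with it
  turns these maps into piecewise smooth charts.\<close>

section \<open>The torus and skew coordinates\<close>

lemma integral_vec_iff: "integral_vec v \<longleftrightarrow> v$1 \<in> \<int> \<and> v$2 \<in> \<int>"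
  by (auto simp: integral_vec_def forall_2)

lemma integral_vec_minus [simp]: "integral_vec (- n) \<longleftrightarrow> integral_vec n"
  by (simp add: integral_vec_def)

lemma integral_vec_eq_0_if_norm_less_1:
  assumes "integral_vec n" "norm n < 1" shows "n = 0"
proof -
  have "n$i = 0" for i
  proof -
    have "\<bar>n$i\<bar> < 1" using component_le_norm_cart[of n i] assms(2) by linarith
    moreover have "n$i \<in> \<int>" using assms(1) by (simp add: integral_vec_def)
    ultimately show "n$i = 0" by (metis Ints_nonzero_abs_less1)
  qed
  then show ?thesis by (simp add: vec_eq_iff)
qed

lemma cis_2pi_eq_iff: "cis (2*pi*a) = cis (2*pi*b) \<longleftrightarrow> a - b \<in> \<int>"
proof
  assume "cis (2*pi*a) = cis (2*pi*b)"
  then have "cis (2*pi*(a - b)) = 1" by (simp add: cis_divide[symmetric] right_diff_distrib)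
  from arg_cong[OF this, of Re] have "cos (2*pi*(a - b)) = 1" by simp
  then obtain n :: int where "2*pi*(a - b) = n * 2 * pi" by (auto simp: cos_one_2pi_int)
  then have "a - b = n" by simp
  then show "a - b \<in> \<int>" by simp
next
  assume "a - b \<in> \<int>"
  then have "cis (2*pi*(a - b)) = 1" by simp
  moreover have "cis (2*pi*a) = cis (2*pi*(a - b)) * cis (2*pi*b)" by (simp add: cis_mult algebra_simps)
  ultimately show "cis (2*pi*a) = cis (2*pi*b)" by simp
qed

lemma torus_map_eq_iff: "torus_map x = torus_map y \<longleftrightarrow> integral_vec (x - y)"
  by (simp add: torus_map_def integral_vec_iff cis_2pi_eq_iff)

lemma torus_map_add_integral: "integral_vec n \<Longrightarrow> torus_map (x + n) = torus_map x"
  by (simp add: torus_map_eq_iff)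

lemma continuous_on_torus_map: "continuous_on S torus_map"
  unfolding torus_map_def by (intro continuous_intros)

lemma cis_2pi_near_imp_near_mod_1:
  assumes "e > 0"
  shows "\<exists>d>0. \<forall>a. cmod (cis (2*pi*a) - cis (2*pi*a0)) < d \<longrightarrow> (\<exists>k\<in>\<int>. \<bar>a - k - a0\<bar> < e)"
proof -
  have "continuous (at 1) Arg" by (rule continuous_at_Arg) (auto simp: complex_nonpos_Reals_iff)
  then obtain d where d: "d > 0" "\<And>u. dist u 1 < d \<Longrightarrow> dist (Arg u) (Arg 1) < 2*pi*e"
    using assms unfolding continuous_at_eps_delta by (metis mult_pos_pos pi_gt_zero zero_less_numeral)
  have "\<exists>k\<in>\<int>. \<bar>a - k - a0\<bar> < e" if near: "cmod (cis (2*pi*a) - cis (2*pi*a0)) < d" for a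
  proof -
    define u where "u = cis (2*pi*(a - a0))"
    have "u - 1 = (cis (2*pi*a) - cis (2*pi*a0)) / cis (2*pi*a0)"
      by (simp add: u_def diff_divide_distrib cis_divide right_diff_distrib)
    then have "cmod (u - 1) < d" using near by (simp add: norm_divide)
    then have "\<bar>Arg u\<bar> < 2*pi*e" using d(2)[of u] by (simp add: dist_norm)
    have "cis (2*pi*(Arg u / (2*pi))) = cis (2*pi*(a - a0))" by (simp add: cis_Arg u_def)
    then have "Arg u / (2*pi) - (a - a0) \<in> \<int>" by (simp only: cis_2pi_eq_iff)
    then obtain n :: int where "Arg u / (2*pi) - (a - a0) = of_int n" by (auto elim!: Ints_cases)
    then have "a - of_int (-n) - a0 = Arg u / (2*pi)" by (simp add: algebra_simps)
    moreover have "\<bar>Arg u / (2*pi)\<bar> < e" using \<open>\<bar>Arg u\<bar> < 2*pi*e\<close>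
      by (simp add: abs_divide divide_less_eq mult.commute)
    ultimately have "\<bar>a - of_int (-n) - a0\<bar> < e" by simp
    then show ?thesis by (metis Ints_of_int)
  qed
  then show ?thesis using d(1) by blast
qed

lemma torus_map_near_imp_near_mod_lattice:
  assumes "e > 0"
  shows "\<exists>d>0. \<forall>y. dist (torus_map y) (torus_map y0) < d \<longrightarrow> (\<exists>n. integral_vec n \<and> norm (y - n - y0) < e)"
proof -
  obtain d1 where d1: "d1 > 0" "\<And>a. cmod (cis (2*pi*a) - cis (2*pi*(y0$1))) < d1 \<Longrightarrow> (\<exists>k\<in>\<int>. \<bar>a - k - y0$1\<bar> < e/2)"
    using cis_2pi_near_imp_near_mod_1[of "e/2" "y0$1"] assms by auto
  obtain d2 where d2: "d2 > 0" "\<And>a. cmod (cis (2*pi*a) - cis (2*pi*(y0$2))) < d2 \<Longrightarrow> (\<exists>k\<in>\<int>. \<bar>a - k - y0$2\<bar> < e/2)"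
    using cis_2pi_near_imp_near_mod_1[of "e/2" "y0$2"] assms by auto
  have "\<exists>n. integral_vec n \<and> norm (y - n - y0) < e" if near: "dist (torus_map y) (torus_map y0) < min d1 d2" for y
  proof -
    have "cmod (cis (2*pi*y$1) - cis (2*pi*(y0$1))) < d1"
      using dist_fst_le[of "torus_map y" "torus_map y0"] near by (simp add: torus_map_def dist_norm)
    then obtain k1 where k1: "k1 \<in> \<int>" "\<bar>y$1 - k1 - y0$1\<bar> < e/2" using d1 by blast
    have "cmod (cis (2*pi*y$2) - cis (2*pi*(y0$2))) < d2"
      using dist_snd_le[of "torus_map y" "torus_map y0"] near by (simp add: torus_map_def dist_norm)
    then obtain k2 where k2: "k2 \<in> \<int>" "\<bar>y$2 - k2 - y0$2\<bar> < e/2" using d2 by blast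
    define n :: "real^2" where "n = vector [k1, k2]"
    have "integral_vec n" using k1 k2 by (simp add: integral_vec_iff n_def)
    moreover have "norm (y - n - y0) < e"
      using norm_le_l1_cart[of "y - n - y0"] k1 k2 by (simp add: sum_2 n_def)
    ultimately show ?thesis by blast
  qed
  then show ?thesis using d1(1) d2(1) by (intro exI[of _ "min d1 d2"]) auto
qed

definition det2 :: "real^2 \<Rightarrow> real^2 \<Rightarrow> real" where
  "det2 x y = x$1 * y$2 - x$2 * y$1"

lemma det2_scaleR_left [simp]: "det2 (c *\<^sub>R x) y = c * det2 x y"
  and det2_scaleR_right [simp]: "det2 x (c *\<^sub>R y) = c * det2 x y"
  and det2_add_left [simp]: "det2 (x + z) y = det2 x y + det2 z y"
  and det2_add_right [simp]: "det2 x (y + z) = det2 x y + det2 x z"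
  and det2_diff_left [simp]: "det2 (x - z) y = det2 x y - det2 z y"
  and det2_diff_right [simp]: "det2 x (y - z) = det2 x y - det2 x z"
  and det2_minus_left [simp]: "det2 (- x) y = - det2 x y"
  and det2_minus_right [simp]: "det2 x (- y) = - det2 x y"
  and det2_self [simp]: "det2 x x = 0"
  and det2_zero_left [simp]: "det2 0 y = 0"
  and det2_zero_right [simp]: "det2 x 0 = 0"
  by (simp_all add: det2_def algebra_simps)

lemma det2_commute: "det2 b a = - det2 a b"
  by (simp add: det2_def)

lemma det2_eq_0_imp_parallel:
  assumes "v \<noteq> 0" "det2 v z = 0" shows "\<exists>t. z = t *\<^sub>R v"
proof (cases "v$1 = 0")
  case True
  then have "v$2 \<noteq> 0" using assms(1) by (auto simp: vec_eq_iff forall_2)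
  then show ?thesis using True assms(2)
    by (intro exI[of _ "z$2 / v$2"]) (auto simp: vec_eq_iff forall_2 det2_def)
next
  case False
  then show ?thesis using assms(2)
    by (intro exI[of _ "z$1 / v$1"]) (auto simp: vec_eq_iff forall_2 det2_def field_simps)
qed

lemma det2_neq_0_if_span_UNIV:
  assumes "span {a, b} = UNIV" shows "det2 a b \<noteq> 0"
proof
  assume "det2 a b = 0"
  then have "{a, b} \<subseteq> {u. det2 a u = 0 \<and> det2 b u = 0}" by (auto simp: det2_def algebra_simps)
  moreover have "subspace {u. det2 a u = 0 \<and> det2 b u = 0}" by (intro subspaceI) auto
  ultimately have "span {a, b} \<subseteq> {u. det2 a u = 0 \<and> det2 b u = 0}" by (rule span_minimal)
  then have "(vector [1, 0] :: real^2) \<in> {u. det2 a u = 0 \<and> det2 b u = 0}"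
    "(vector [0, 1] :: real^2) \<in> {u. det2 a u = 0 \<and> det2 b u = 0}" using assms by auto
  then have "a = 0" "b = 0" by (simp_all add: det2_def vec_eq_iff forall_2)
  then have "span {a, b} = {0}" by simp
  then have "(vector [1, 0] :: real^2) = 0" using assms by blast
  then show False by (simp add: vec_eq_iff forall_2)
qed

text \<open>Coordinates with respect to the basis a, b, multiplied by det2 a b so that integral vectors
  have integral coordinates.\<close>
definition coords :: "real^2 \<Rightarrow> real^2 \<Rightarrow> real^2 \<Rightarrow> real^2" where
  "coords a b y = vector [det2 y b, det2 a y]"

definition from_coords :: "real^2 \<Rightarrow> real^2 \<Rightarrow> real^2 \<Rightarrow> real^2" where
  "from_coords a b w = (1 / det2 a b) *\<^sub>R (w$1 *\<^sub>R a + w$2 *\<^sub>R b)"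

lemma coords_from_coords: "det2 a b \<noteq> 0 \<Longrightarrow> coords a b (from_coords a b w) = w"
  by (simp add: vec_eq_iff forall_2 coords_def from_coords_def det2_commute[of b a])

lemma from_coords_coords:
  assumes "det2 a b \<noteq> 0" shows "from_coords a b (coords a b y) = y"
proof -
  have "det2 y b * a$i + det2 a y * b$i = det2 a b * y$i" for i
    using exhaust_2[of i] by (auto simp: det2_def algebra_simps)
  then show ?thesis using assms by (simp add: vec_eq_iff coords_def from_coords_def field_simps)
qed

lemma linear_coords: "linear (coords a b)"
  by (rule linearI) (simp_all add: vec_eq_iff forall_2 coords_def det2_def algebra_simps)

lemma linear_from_coords: "linear (from_coords a b)"
  by (rule linearI) (simp_all add: vec_eq_iff forall_2 from_coords_def algebra_simps)

lemma integral_vec_coords: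
  "integral_vec a \<Longrightarrow> integral_vec b \<Longrightarrow> integral_vec n \<Longrightarrow> integral_vec (coords a b n)"
  by (simp add: integral_vec_iff coords_def det2_def)

lemma det2_from_coords:
  assumes "det2 a b \<noteq> 0"
  shows "det2 a (from_coords a b w) = w$2"
    and "det2 b (from_coords a b w) = - w$1"
    and "det2 (- (a + b)) (from_coords a b w) = w$1 - w$2"
  using assms by (simp_all add: from_coords_def det2_commute[of b a] field_simps)

lemma primitive_vec_nonzero:
  assumes "primitive_vec v" shows "v \<noteq> 0"
proof
  assume "v = 0"
  then have "v = real (2::nat) *\<^sub>R 0" by simp
  moreover have "integral_vec (0::real^2)" by (simp add: integral_vec_def)
  ultimately show False using assms unfolding primitive_vec_def by fastforce
qed

lemma primitive_vec_det2_eq_1: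
  assumes "primitive_vec v" shows "\<exists>n. integral_vec n \<and> det2 v n = 1"
proof -
  have iv: "integral_vec v" and pr: "\<And>w k. integral_vec w \<Longrightarrow> v = real k *\<^sub>R w \<Longrightarrow> k = 1"
    using assms by (auto simp: primitive_vec_def)
  obtain i j :: int where ij: "v$1 = i" "v$2 = j" using iv by (auto simp: integral_vec_iff elim!: Ints_cases)
  define g where "g = gcd i j"
  have "g \<noteq> 0" using primitive_vec_nonzero[OF assms] ij by (auto simp: g_def vec_eq_iff forall_2)
  then have gpos: "g > 0" by (simp add: g_def order_le_neq_trans)
  define w :: "real^2" where "w = vector [of_int (i div g), of_int (j div g)]"
  have "v = real (nat g) *\<^sub>R w"
  proof -
    have "i = g * (i div g)" "j = g * (j div g)" by (simp_all add: g_def)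
    then have "real_of_int i = g * real_of_int (i div g)" "real_of_int j = g * real_of_int (j div g)"
      by (metis of_int_mult)+
    then show ?thesis using ij gpos by (simp add: vec_eq_iff forall_2 w_def)
  qed
  moreover have "integral_vec w" by (simp add: w_def integral_vec_iff)
  ultimately have "nat g = 1" using pr by blast
  then have "gcd i j = 1" using gpos by (simp add: g_def)
  then obtain s t where st: "s * i + t * j = 1" using bezout_int[of i j] by auto
  define n :: "real^2" where "n = vector [of_int (- t), of_int s]"
  have "real_of_int (s * i + t * j) = 1" using st by simp
  then have "det2 v n = 1" by (simp add: det2_def n_def ij algebra_simps)
  moreover have "integral_vec n" by (simp add: n_def integral_vec_iff)
  ultimately show ?thesis by blast
qed

lemma torus_map_in_circle_subgroup:
  assumes "primitive_vec v" "det2 v y \<in> \<int>" shows "torus_map y \<in> circle_subgroup v"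
proof -
  obtain n0 where n0: "integral_vec n0" "det2 v n0 = 1" using primitive_vec_det2_eq_1 assms(1) by blast
  define k where "k = det2 v y"
  have "det2 v (y - k *\<^sub>R n0) = 0" by (simp add: n0 k_def)
  then obtain t where t: "y - k *\<^sub>R n0 = t *\<^sub>R v"
    using det2_eq_0_imp_parallel primitive_vec_nonzero assms(1) by blast
  have "integral_vec (k *\<^sub>R n0)" using n0(1) assms(2) by (simp add: integral_vec_iff k_def)
  have "y = t *\<^sub>R v + k *\<^sub>R n0" using t by (simp add: algebra_simps)
  then have "torus_map y = torus_map (t *\<^sub>R v + k *\<^sub>R n0)" by (rule arg_cong)
  also have "\<dots> = torus_map (t *\<^sub>R v)" by (rule torus_map_add_integral) fact
  finally show ?thesis by (auto simp: circle_subgroup_def)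
qed

section \<open>Piecewise smooth charts from piecewise linear germs\<close>

text \<open>This family is closed under differentiation, which is how smoothness is proved.\<close>
definition affine_cis :: "real^2 \<Rightarrow> (real^2 \<Rightarrow> real^2) \<Rightarrow> real^2 \<Rightarrow> (real^2 \<Rightarrow> real^2) \<Rightarrow>
    complex \<Rightarrow> complex \<Rightarrow> real^2 \<Rightarrow> (real^2) \<times> complex \<times> complex" where
  "affine_cis c A y0 B \<beta>1 \<beta>2 x =
     (c + A x, \<beta>1 * cis (2*pi*(y0 + B x)$1), \<beta>2 * cis (2*pi*(y0 + B x)$2))"

lemma has_derivative_affine_cis:
  assumes "linear A" "linear B"
  shows "(affine_cis c A y0 B \<beta>1 \<beta>2 has_derivative (\<lambda>h. (A h,
            \<beta>1 * ((2*pi*(B h)$1) *\<^sub>R (\<i> * cis (2*pi*(y0 + B x)$1))),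
            \<beta>2 * ((2*pi*(B h)$2) *\<^sub>R (\<i> * cis (2*pi*(y0 + B x)$2)))))) (at x)"
proof -
  have bA: "bounded_linear A"
    using assms by (simp add: linear_conv_bounded_linear)
  have angle: "((\<lambda>x. 2*pi*(y0 + B x)$i) has_derivative (\<lambda>h. 2*pi*(B h)$i)) (at x)" for i
  proof -
    have "bounded_linear (\<lambda>x. 2*pi*(B x)$i)"
      using assms(2) by (auto intro!: linearI simp: linear_add linear_scale linear_conv_bounded_linear[symmetric])
    then have "((\<lambda>x. 2*pi*(B x)$i + 2*pi*y0$i) has_derivative (\<lambda>h. 2*pi*(B h)$i)) (at x)"
      by (intro has_derivative_add_const bounded_linear_imp_has_derivative)
    then show ?thesis by (simp add: algebra_simps)
  qed
  show ?thesis unfolding affine_cis_def[abs_def]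
    by (intro has_derivative_Pair has_derivative_mult_right has_derivative_cis angle
        has_derivative_add_const[where f = A and c = c, simplified add.commute]
        bounded_linear_imp_has_derivative bA)
qed

lemma frechet_derivative_affine_cis:
  assumes "linear A" "linear B"
  shows "frechet_derivative (affine_cis c A y0 B \<beta>1 \<beta>2) (at x) = (\<lambda>h. (A h,
            \<beta>1 * ((2*pi*(B h)$1) *\<^sub>R (\<i> * cis (2*pi*(y0 + B x)$1))),
            \<beta>2 * ((2*pi*(B h)$2) *\<^sub>R (\<i> * cis (2*pi*(y0 + B x)$2)))))"
  using frechet_derivative_at[OF has_derivative_affine_cis[OF assms]] by metis

lemma dderiv_affine_cis:
  assumes "linear A" "linear B"
  shows "\<exists>c' A' \<beta>1' \<beta>2'. linear A' \<and> dderiv es (affine_cis c A y0 B \<beta>1 \<beta>2) = affine_cis c' A' y0 B \<beta>1' \<beta>2'"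
proof (induction es)
  case Nil
  then show ?case using assms by auto
next
  case (Cons e es)
  then obtain c' A' \<beta>1' \<beta>2' where IH: "linear A'"
      "dderiv es (affine_cis c A y0 B \<beta>1 \<beta>2) = affine_cis c' A' y0 B \<beta>1' \<beta>2'"
    by blast
  have "dderiv (e # es) (affine_cis c A y0 B \<beta>1 \<beta>2) = affine_cis (A' e) (\<lambda>_. 0) y0 B
      (\<beta>1' * (of_real (2*pi*(B e)$1) * \<i>)) (\<beta>2' * (of_real (2*pi*(B e)$2) * \<i>))"
    by (simp add: IH frechet_derivative_affine_cis[OF IH(1) assms(2)])
       (simp add: fun_eq_iff affine_cis_def scaleR_conv_of_real algebra_simps)
  then show ?case using linear_zero by blast
qed

lemma smooth_on_affine_cis:
  assumes "linear A" "linear B"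
  shows "smooth_on V (affine_cis c A y0 B \<beta>1 \<beta>2)"
  unfolding smooth_on_def
proof (intro allI impI)
  fix es :: "(real^2) list"
  obtain c' A' \<beta>1' \<beta>2' where A': "linear A'"
    and eq: "dderiv es (affine_cis c A y0 B \<beta>1 \<beta>2) = affine_cis c' A' y0 B \<beta>1' \<beta>2'"
    using dderiv_affine_cis[OF assms] by blast
  show "dderiv es (affine_cis c A y0 B \<beta>1 \<beta>2) differentiable_on V"
    unfolding eq differentiable_on_def
    using has_derivative_affine_cis[OF A' assms(2)] by (meson differentiableI has_derivative_at_withinI)
qed

lemma inj_frechet_derivative_affine_cis:
  assumes "linear A" "linear B" and kernel: "\<And>h. A h = 0 \<Longrightarrow> B h = 0 \<Longrightarrow> h = 0"
  shows "inj (frechet_derivative (affine_cis c A y0 B 1 1) (at x))"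
proof (rule injI)
  fix h h'
  assume "frechet_derivative (affine_cis c A y0 B 1 1) (at x) h = frechet_derivative (affine_cis c A y0 B 1 1) (at x) h'"
  then have "A h = A h'" "(B h)$1 = (B h')$1" "(B h)$2 = (B h')$2"
    by (auto simp: frechet_derivative_affine_cis[OF assms(1,2)] scaleR_cancel_right)
  then have "A (h - h') = 0" "B (h - h') = 0"
    using assms(1,2) by (simp_all add: linear_diff vec_eq_iff forall_2)
  then show "h = h'" using kernel by force
qed

definition cover_map :: "real^2 \<Rightarrow> real^2 \<Rightarrow> (real^2) \<times> (real^2) \<Rightarrow> (real^2) \<times> complex \<times> complex" where
  "cover_map a b u = (fst u, torus_map (from_coords a b (snd u)))"

lemma continuous_on_cover_map: "continuous_on S (cover_map a b)"
  unfolding cover_map_def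
  by (intro continuous_intros continuous_on_compose2[OF continuous_on_torus_map]
      linear_continuous_on bounded_linear_compose[OF _ bounded_linear_snd])
     (auto simp: linear_conv_bounded_linear[symmetric] linear_from_coords)

lemma cover_map_linear_smooth_immersion:
  fixes L :: "real^2 \<Rightarrow> (real^2) \<times> (real^2)"
  assumes "det2 a b \<noteq> 0" "linear L" "inj L"
  shows "\<exists>\<psi>. smooth_on UNIV \<psi> \<and> (\<forall>x. inj (frechet_derivative \<psi> (at x)) \<and> \<psi> x = cover_map a b (p + L x))"
proof -
  define A where "A = fst \<circ> L"
  define B where "B = from_coords a b \<circ> snd \<circ> L"
  have A: "linear A" and B: "linear B" unfolding A_def B_def
    by (intro linear_compose assms(2) linear_from_coords bounded_linear.linear[OF bounded_linear_fst]
        bounded_linear.linear[OF bounded_linear_snd])+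
  define \<psi> where "\<psi> = affine_cis (fst p) A (from_coords a b (snd p)) B 1 1"
  have "\<psi> x = cover_map a b (p + L x)" for x
    using linear_from_coords by (simp add: \<psi>_def affine_cis_def cover_map_def A_def B_def torus_map_def linear_add)
  moreover have "inj (frechet_derivative \<psi> (at x))" for x
    unfolding \<psi>_def
  proof (rule inj_frechet_derivative_affine_cis[OF A B])
    fix h assume "A h = 0" "B h = 0"
    then have "snd (L h) = 0"
      using coords_from_coords[OF assms(1), of "snd (L h)"] linear_0[OF linear_coords]
      by (simp add: B_def)
    then have "L h = L 0" using \<open>A h = 0\<close> assms(2) by (simp add: A_def prod_eq_iff linear_0)
    then show "h = 0" using assms(3) by (simp add: inj_eq)
  qed
  moreover have "smooth_on UNIV \<psi>" unfolding \<psi>_def by (rule smooth_on_affine_cis[OF A B])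
  ultimately show ?thesis by blast
qed

lemma cover_map_eq_imp_eq:
  assumes "integral_vec a" "integral_vec b" "det2 a b \<noteq> 0"
    and "norm (snd u - snd u') < 1" "cover_map a b u = cover_map a b u'"
  shows "u = u'"
proof -
  have "integral_vec (from_coords a b (snd u) - from_coords a b (snd u'))"
    using assms(5) by (simp add: cover_map_def torus_map_eq_iff)
  then have "integral_vec (coords a b (from_coords a b (snd u - snd u')))"
    using assms(1,2) integral_vec_coords linear_diff[OF linear_from_coords] by metis
  then have "integral_vec (snd u - snd u')" using assms(3) by (simp add: coords_from_coords)
  then have "snd u - snd u' = 0" using assms(4) by (rule integral_vec_eq_0_if_norm_less_1)
  then show ?thesis using assms(5) by (simp add: cover_map_def prod_eq_iff)
qed

lemma cover_map_lift_near:
  assumes ab: "integral_vec a" "integral_vec b" "det2 a b \<noteq> 0"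
    and shift: "\<And>q w n. (q, w) \<in> T \<Longrightarrow> integral_vec n \<Longrightarrow> (q, w + n) \<in> T"
    and "\<rho> > 0"
  obtains V where "open V" "cover_map a b p \<in> V"
    "\<And>y. y \<in> V \<Longrightarrow> y \<in> cover_map a b ` T \<Longrightarrow> \<exists>z. norm z < \<rho> \<and> p + z \<in> T \<and> y = cover_map a b (p + z)"
proof -
  obtain B where B: "B > 0" "\<And>y. norm (coords a b y) \<le> norm y * B"
    using bounded_linear.pos_bounded linear_coords[unfolded linear_conv_bounded_linear] by blast
  define y0 where "y0 = from_coords a b (snd p)"
  obtain \<delta> where \<delta>: "\<delta> > 0"
    "\<And>y. dist (torus_map y) (torus_map y0) < \<delta> \<Longrightarrow> \<exists>n. integral_vec n \<and> norm (y - n - y0) < \<rho>/(2*B)"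
    using torus_map_near_imp_near_mod_lattice[of "\<rho>/(2*B)" y0] \<open>\<rho> > 0\<close> B(1) by auto
  define V where "V = ball (fst p) (\<rho>/2) \<times> ball (torus_map y0) \<delta>"
  have "\<exists>z. norm z < \<rho> \<and> p + z \<in> T \<and> y = cover_map a b (p + z)"
    if yV: "y \<in> V" and yT: "y \<in> cover_map a b ` T" for y
  proof -
    obtain q w where qw: "(q, w) \<in> T" "y = cover_map a b (q, w)" using yT by auto
    have "dist (torus_map (from_coords a b w)) (torus_map y0) < \<delta>" "dist q (fst p) < \<rho>/2"
      using qw(2) yV by (auto simp: V_def cover_map_def dist_commute)
    then obtain n where n: "integral_vec n" "norm (from_coords a b w - n - y0) < \<rho>/(2*B)"
      using \<delta>(2) by blast
    define w' where "w' = w + (- coords a b n)"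
    have "(q, w') \<in> T" unfolding w'_def using ab n(1) by (intro shift qw(1)) (simp add: integral_vec_coords)
    moreover have "cover_map a b (q, w') = y"
    proof -
      have "from_coords a b w' = from_coords a b w + (- n)"
        by (simp only: w'_def linear_add[OF linear_from_coords] linear_neg[OF linear_from_coords]
            from_coords_coords[OF ab(3)])
      then show ?thesis using qw(2) n(1) by (simp add: cover_map_def torus_map_eq_iff)
    qed
    moreover have "norm ((q, w') - p) < \<rho>"
    proof -
      have "w' - snd p = coords a b (from_coords a b w - n - y0)"
        by (simp add: w'_def y0_def linear_diff[OF linear_coords] coords_from_coords[OF ab(3)])
      then have "norm (w' - snd p) \<le> norm (from_coords a b w - n - y0) * B" using B(2) by simp
      also have "\<dots> < \<rho>/2" using mult_strict_right_mono[OF n(2) B(1)] B(1) by simp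
      finally have "norm (w' - snd p) < \<rho>/2" .
      moreover have "norm (q - fst p) < \<rho>/2" using \<open>dist q (fst p) < \<rho>/2\<close> by (simp add: dist_norm)
      moreover have "(q, w') - p = (q - fst p, w' - snd p)" by (simp add: prod_eq_iff)
      ultimately show ?thesis using norm_Pair_le[of "q - fst p" "w' - snd p"] by simp
    qed
    ultimately show ?thesis by (intro exI[of _ "(q, w') - p"]) auto
  qed
  moreover have "open V" by (simp add: V_def open_Times)
  moreover have "cover_map a b p \<in> V" using \<open>\<rho> > 0\<close> \<delta>(1) by (simp add: V_def cover_map_def y0_def)
  ultimately show ?thesis using that by blast
qed

definition wedge :: "real^2 \<Rightarrow> real^2 \<Rightarrow> (real^2) set" where
  "wedge \<alpha> \<beta> = {x. 0 \<le> \<alpha> \<bullet> x \<and> 0 \<le> \<beta> \<bullet> x}"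

lemma inner_vector2: "(vector [a, b] :: real^2) \<bullet> x = a * x$1 + b * x$2"
  by (simp add: inner_vec_def sum_2)

lemma closed_wedge: "closed (wedge \<alpha> \<beta>)"
  unfolding wedge_def by (intro closed_Collect_conj closed_Collect_le continuous_intros)

lemma polyhedron_wedge: "polyhedron (wedge \<alpha> \<beta>)"
proof -
  have "wedge \<alpha> \<beta> = {x. \<alpha> \<bullet> x \<ge> 0} \<inter> {x. \<beta> \<bullet> x \<ge> 0}" by (auto simp: wedge_def)
  then show ?thesis by (simp add: polyhedron_Int polyhedron_halfspace_ge)
qed

lemma scaleR_in_wedge: "x \<in> wedge \<alpha> \<beta> \<Longrightarrow> 0 \<le> c \<Longrightarrow> c *\<^sub>R x \<in> wedge \<alpha> \<beta>"
  by (simp add: wedge_def)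

locale pl_embedding =
  fixes pieces :: "((real^2) \<times> (real^2) \<times> (real^2 \<Rightarrow> 'a::real_normed_vector)) set"
    and F :: "real^2 \<Rightarrow> 'a"
  assumes finite_pieces: "finite pieces"
    and linear_piece: "(\<alpha>, \<beta>, L) \<in> pieces \<Longrightarrow> linear L"
    and inj_piece: "(\<alpha>, \<beta>, L) \<in> pieces \<Longrightarrow> inj L"
    and pieces_cover: "\<exists>(\<alpha>, \<beta>, L) \<in> pieces. x \<in> wedge \<alpha> \<beta>"
    and F_eq_piece: "(\<alpha>, \<beta>, L) \<in> pieces \<Longrightarrow> x \<in> wedge \<alpha> \<beta> \<Longrightarrow> F x = L x"
    and inj_F: "inj F"
begin

lemma continuous_on_F: "continuous_on UNIV F"
proof -
  have "continuous_on (wedge (fst i) (fst (snd i))) F" if "i \<in> pieces" for i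
  proof -
    obtain \<alpha> \<beta> L where i: "i = (\<alpha>, \<beta>, L)" by (cases i) blast
    have "continuous_on (wedge \<alpha> \<beta>) L"
      using linear_piece[of \<alpha> \<beta> L] that i by (simp add: linear_continuous_on linear_conv_bounded_linear)
    moreover have "\<And>x. x \<in> wedge \<alpha> \<beta> \<Longrightarrow> L x = F x" using F_eq_piece[of \<alpha> \<beta> L] that i by simp
    ultimately show ?thesis unfolding i fst_conv snd_conv by (rule continuous_on_eq)
  qed
  then have "continuous_on (\<Union>i\<in>pieces. wedge (fst i) (fst (snd i))) F"
    by (intro continuous_on_closed_Union finite_pieces closed_wedge)
  moreover have "UNIV = (\<Union>i\<in>pieces. wedge (fst i) (fst (snd i)))"
  proof (rule UNIV_eq_I)
    fix x
    obtain \<alpha> \<beta> L where "(\<alpha>, \<beta>, L) \<in> pieces" "x \<in> wedge \<alpha> \<beta>" using pieces_cover[of x] by blast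
    then show "x \<in> (\<Union>i\<in>pieces. wedge (fst i) (fst (snd i)))" by (intro UN_I) auto
  qed
  ultimately show ?thesis by simp
qed

lemma F_scaleR:
  assumes "0 \<le> c" shows "F (c *\<^sub>R x) = c *\<^sub>R F x"
proof -
  obtain \<alpha> \<beta> L where L: "(\<alpha>, \<beta>, L) \<in> pieces" "x \<in> wedge \<alpha> \<beta>" using pieces_cover[of x] by blast
  then have "F (c *\<^sub>R x) = L (c *\<^sub>R x)" using F_eq_piece scaleR_in_wedge assms by blast
  also have "\<dots> = c *\<^sub>R L x" using linear_piece[OF L(1)] by (rule linear_scale)
  finally show ?thesis using F_eq_piece[OF L] by simp
qed

lemma F_0 [simp]: "F 0 = 0"
  using F_scaleR[of 0 0] by simp

lemma norm_F_bounded_below: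
  obtains m where "m > 0" "\<And>x. m * norm x \<le> norm (F x)"
proof -
  have "continuous_on (sphere 0 1) (\<lambda>x. norm (F x))"
    by (intro continuous_on_norm continuous_on_subset[OF continuous_on_F]) auto
  then have "\<exists>x0\<in>sphere 0 1. \<forall>y\<in>sphere 0 1. norm (F x0) \<le> norm (F y)"
    by (intro continuous_attains_inf) (auto simp: sphere_eq_empty)
  then obtain x0 where x0: "x0 \<in> sphere 0 1" "\<And>y. y \<in> sphere 0 1 \<Longrightarrow> norm (F x0) \<le> norm (F y)"
    by blast
  have "x0 \<noteq> 0" using x0(1) by auto
  then have "F x0 \<noteq> 0" using injD[OF inj_F, of x0 0] by auto
  moreover have "norm (F x0) * norm x \<le> norm (F x)" for x
  proof (cases "x = 0")
    case False
    then have "norm (F x0) \<le> norm (F ((1 / norm x) *\<^sub>R x))" using x0(2) by simp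
    also have "\<dots> = norm (F x) / norm x" using F_scaleR[of "1 / norm x" x] by simp
    finally show ?thesis using False by (simp add: field_simps)
  qed simp
  ultimately show ?thesis using that[of "norm (F x0)"] by simp
qed

lemma compact_norm_F_le: "compact {x. norm (F x) \<le> r}"
proof -
  obtain m where m: "m > 0" "\<And>x. m * norm x \<le> norm (F x)" using norm_F_bounded_below by blast
  have "{x. norm (F x) \<le> r} \<subseteq> cball 0 (r / m)"
  proof
    fix x assume "x \<in> {x. norm (F x) \<le> r}"
    then have "m * norm x \<le> r" using m(2)[of x] by simp
    then show "x \<in> cball 0 (r / m)" using m(1) by (simp add: field_simps)
  qed
  moreover have "closed {x. norm (F x) \<le> r}"
    by (intro closed_Collect_le continuous_intros continuous_on_F)
  ultimately show ?thesis by (meson bounded_cball bounded_subset compact_eq_bounded_closed)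
qed

end

definition locally_pl :: "((real^2) \<times> (real^2)) set \<Rightarrow> (real^2) \<times> (real^2) \<Rightarrow> bool" where
  "locally_pl T p \<longleftrightarrow> (\<exists>pieces F \<epsilon>. pl_embedding pieces F \<and> \<epsilon> > 0 \<and>
     (\<forall>z. norm z < \<epsilon> \<longrightarrow> (p + z \<in> T \<longleftrightarrow> z \<in> range F)))"

lemma inj_on_cover_map_small:
  fixes F :: "real^2 \<Rightarrow> (real^2) \<times> (real^2)"
  assumes ab: "integral_vec a" "integral_vec b" "det2 a b \<noteq> 0" and "inj F" "\<rho> < 1/2"
  shows "inj_on (\<lambda>x. cover_map a b (p + F x)) {x. norm (F x) \<le> \<rho>}"
proof (rule inj_onI)
  fix x x' assume "x \<in> {x. norm (F x) \<le> \<rho>}" "x' \<in> {x. norm (F x) \<le> \<rho>}"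
    and eq: "cover_map a b (p + F x) = cover_map a b (p + F x')"
  moreover have "norm (snd (F x) - snd (F x')) \<le> norm (F x) + norm (F x')"
    using norm_triangle_ineq4[of "snd (F x)" "snd (F x')"] norm_snd_le[of "snd (F x)" "fst (F x)"]
      norm_snd_le[of "snd (F x')" "fst (F x')"] by simp
  ultimately have "p + F x = p + F x'" using \<open>\<rho> < 1/2\<close> by (intro cover_map_eq_imp_eq[OF ab]) auto
  then show "x = x'" using \<open>inj F\<close> by (simp add: inj_eq)
qed

lemma cover_map_pl_local_homeomorphism:
  fixes F :: "real^2 \<Rightarrow> (real^2) \<times> (real^2)"
  assumes ab: "integral_vec a" "integral_vec b" "det2 a b \<noteq> 0"
    and shift: "\<And>q w n. (q, w) \<in> T \<Longrightarrow> integral_vec n \<Longrightarrow> (q, w + n) \<in> T"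
    and F: "pl_embedding pieces F" and "\<epsilon> > 0"
    and near: "\<And>z. norm z < \<epsilon> \<Longrightarrow> p + z \<in> T \<longleftrightarrow> z \<in> range F"
  defines "\<phi> \<equiv> \<lambda>x. cover_map a b (p + F x)"
  obtains W g where "open W" "bounded W" "0 \<in> W" "homeomorphism W (\<phi> ` W) \<phi> g"
    "openin (top_of_set (cover_map a b ` T)) (\<phi> ` W)"
proof -
  interpret pl_embedding pieces F by (fact F)
  define \<rho> where "\<rho> = min \<epsilon> (1/4)"
  have \<rho>: "\<rho> > 0" "\<rho> \<le> \<epsilon>" "\<rho> \<le> 1/4" using \<open>\<epsilon> > 0\<close> by (auto simp: \<rho>_def)
  obtain V where V: "open V" "cover_map a b p \<in> V"
    "\<And>y. y \<in> V \<Longrightarrow> y \<in> cover_map a b ` T \<Longrightarrow> \<exists>z. norm z < \<rho> \<and> p + z \<in> T \<and> y = cover_map a b (p + z)"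
    using cover_map_lift_near[OF ab shift \<rho>(1)] by blast
  have cont: "continuous_on UNIV \<phi>" unfolding \<phi>_def
    by (intro continuous_on_compose2[OF continuous_on_cover_map] continuous_intros continuous_on_F) auto
  define W where "W = {x. norm (F x) < \<rho>} \<inter> \<phi> -` V"
  define K where "K = {x. norm (F x) \<le> \<rho>}"
  have "W \<subseteq> K" by (auto simp: W_def K_def)
  have "inj_on \<phi> K" unfolding \<phi>_def K_def using \<rho> by (intro inj_on_cover_map_small ab inj_F) simp
  then obtain g where g: "homeomorphism K (\<phi> ` K) \<phi> g"
    using homeomorphism_compact[OF compact_norm_F_le continuous_on_subset[OF cont]] by (auto simp: K_def)
  have "\<phi> ` W = cover_map a b ` T \<inter> V"
  proof
    show "\<phi> ` W \<subseteq> cover_map a b ` T \<inter> V"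
    proof
      fix y assume "y \<in> \<phi> ` W"
      then obtain x where x: "norm (F x) < \<rho>" "\<phi> x \<in> V" "y = \<phi> x" by (auto simp: W_def)
      then have "p + F x \<in> T" using near[of "F x"] \<rho> by simp
      then show "y \<in> cover_map a b ` T \<inter> V" using x by (simp add: \<phi>_def)
    qed
    show "cover_map a b ` T \<inter> V \<subseteq> \<phi> ` W"
    proof
      fix y assume "y \<in> cover_map a b ` T \<inter> V"
      then obtain z where z: "norm z < \<rho>" "p + z \<in> T" "y = cover_map a b (p + z)" "y \<in> V"
        using V(3) by blast
      then obtain x where "z = F x" using near \<rho> by fastforce
      with z show "y \<in> \<phi> ` W" by (auto simp: W_def \<phi>_def)
    qed
  qed
  then have "openin (top_of_set (cover_map a b ` T)) (\<phi> ` W)" using V(1) by (simp add: openin_open_Int)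
  moreover have "homeomorphism W (\<phi> ` W) \<phi> g" using \<open>W \<subseteq> K\<close> by (intro homeomorphism_of_subsets[OF g]) auto
  moreover have "open W" unfolding W_def
    by (intro open_Int open_Collect_less open_vimage V(1) cont continuous_intros continuous_on_F)
  moreover have "bounded W"
    using \<open>W \<subseteq> K\<close> compact_norm_F_le unfolding K_def by (meson bounded_subset compact_imp_bounded)
  moreover have "0 \<in> W" using \<rho> V(2) by (simp add: W_def \<phi>_def)
  ultimately show ?thesis using that by blast
qed

lemma cover_map_pl_smooth_pieces:
  fixes F :: "real^2 \<Rightarrow> (real^2) \<times> (real^2)"
  assumes "det2 a b \<noteq> 0" "pl_embedding pieces F" "bounded W"
  obtains P where "finite P" "\<forall>C\<in>P. polytope C" "W \<subseteq> \<Union>P"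
    "\<forall>C\<in>P. \<exists>V \<psi>. open V \<and> C \<inter> W \<subseteq> V \<and> smooth_on V \<psi> \<and>
         (\<forall>y\<in>C \<inter> W. inj (frechet_derivative \<psi> (at y)) \<and> cover_map a b (p + F y) = \<psi> y)"
proof -
  interpret pl_embedding pieces F by (fact assms(2))
  obtain R where R: "W \<subseteq> cbox (- R) R" using bounded_subset_cbox_symmetric assms(3) by blast
  define P where "P = (\<lambda>(\<alpha>, \<beta>, L). wedge \<alpha> \<beta> \<inter> cbox (- R) R) ` pieces"
  have "finite P" using finite_pieces by (simp add: P_def)
  moreover have "polytope (wedge \<alpha> \<beta> \<inter> cbox (- R) R)" for \<alpha> \<beta>
    by (simp add: polytope_eq_bounded_polyhedron polyhedron_Int polyhedron_wedge bounded_Int)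
  then have "\<forall>C\<in>P. polytope C" by (auto simp: P_def)
  moreover have "W \<subseteq> \<Union>P"
  proof
    fix x assume "x \<in> W"
    obtain \<alpha> \<beta> L where L: "(\<alpha>, \<beta>, L) \<in> pieces" "x \<in> wedge \<alpha> \<beta>" using pieces_cover[of x] by blast
    have "wedge \<alpha> \<beta> \<inter> cbox (- R) R \<in> P" unfolding P_def by (rule image_eqI[OF _ L(1)]) simp
    moreover have "x \<in> wedge \<alpha> \<beta> \<inter> cbox (- R) R" using R L(2) \<open>x \<in> W\<close> by blast
    ultimately show "x \<in> \<Union>P" by (rule UnionI)
  qed
  moreover have "\<forall>C\<in>P. \<exists>V \<psi>. open V \<and> C \<inter> W \<subseteq> V \<and> smooth_on V \<psi> \<and>
         (\<forall>y\<in>C \<inter> W. inj (frechet_derivative \<psi> (at y)) \<and> cover_map a b (p + F y) = \<psi> y)"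
  proof
    fix C assume "C \<in> P"
    then obtain \<alpha> \<beta> L where L: "(\<alpha>, \<beta>, L) \<in> pieces" and C: "C = wedge \<alpha> \<beta> \<inter> cbox (- R) R"
      by (auto simp: P_def)
    obtain \<psi> where \<psi>: "smooth_on UNIV \<psi>"
      "\<And>x. inj (frechet_derivative \<psi> (at x)) \<and> \<psi> x = cover_map a b (p + L x)"
      using cover_map_linear_smooth_immersion[OF assms(1) linear_piece[OF L] inj_piece[OF L]] by blast
    have "\<forall>y\<in>C \<inter> W. inj (frechet_derivative \<psi> (at y)) \<and> cover_map a b (p + F y) = \<psi> y"
      using \<psi>(2) F_eq_piece[OF L] by (simp add: C)
    with \<psi>(1) show "\<exists>V \<psi>. open V \<and> C \<inter> W \<subseteq> V \<and> smooth_on V \<psi> \<and>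
         (\<forall>y\<in>C \<inter> W. inj (frechet_derivative \<psi> (at y)) \<and> cover_map a b (p + F y) = \<psi> y)"
      by (intro exI[of _ UNIV] exI[of _ \<psi>]) simp
  qed
  ultimately show ?thesis by (rule that)
qed

lemma pw_smooth_surface_cover_map_image:
  assumes ab: "integral_vec a" "integral_vec b" "det2 a b \<noteq> 0"
    and shift: "\<And>q w n. (q, w) \<in> T \<Longrightarrow> integral_vec n \<Longrightarrow> (q, w + n) \<in> T"
    and pl: "\<And>p. p \<in> T \<Longrightarrow> locally_pl T p"
  shows "pw_smooth_surface (cover_map a b ` T)"
  unfolding pw_smooth_surface_def
proof
  fix y assume "y \<in> cover_map a b ` T"
  then obtain p where "p \<in> T" "y = cover_map a b p" by blast
  then obtain pieces F \<epsilon> where F: "pl_embedding pieces F" "\<epsilon> > 0"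
    "\<And>z. norm z < \<epsilon> \<Longrightarrow> p + z \<in> T \<longleftrightarrow> z \<in> range F"
    using pl unfolding locally_pl_def by blast
  define \<phi> where "\<phi> = (\<lambda>x. cover_map a b (p + F x))"
  obtain W g where W: "open W" "bounded W" "0 \<in> W" "homeomorphism W (\<phi> ` W) \<phi> g"
      "openin (top_of_set (cover_map a b ` T)) (\<phi> ` W)"
    using cover_map_pl_local_homeomorphism[OF ab shift F] unfolding \<phi>_def by blast
  obtain P where P: "finite P" "\<forall>C\<in>P. polytope C" "W \<subseteq> \<Union>P"
    "\<forall>C\<in>P. \<exists>V \<psi>. open V \<and> C \<inter> W \<subseteq> V \<and> smooth_on V \<psi> \<and>
         (\<forall>y\<in>C \<inter> W. inj (frechet_derivative \<psi> (at y)) \<and> \<phi> y = \<psi> y)"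
    using cover_map_pl_smooth_pieces[OF ab(3) F(1) W(2)] unfolding \<phi>_def by blast
  have "\<phi> 0 = y" using \<open>y = cover_map a b p\<close> by (simp add: \<phi>_def pl_embedding.F_0[OF F(1)])
  then have "y \<in> \<phi> ` W" using W(3) by blast
  with W P show "\<exists>(W::(real^2) set) N \<phi> \<phi>' P. open W \<and> y \<in> N \<and> openin (top_of_set (cover_map a b ` T)) N \<and>
      homeomorphism W N \<phi> \<phi>' \<and> finite P \<and> (\<forall>C\<in>P. polytope C) \<and> W \<subseteq> \<Union>P \<and>
      (\<forall>C\<in>P. \<exists>V \<psi>. open V \<and> C \<inter> W \<subseteq> V \<and> smooth_on V \<psi> \<and>
          (\<forall>y\<in>C \<inter> W. inj (frechet_derivative \<psi> (at y)) \<and> \<phi> y = \<psi> y))"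
    by (intro exI[of _ W] exI[of _ "\<phi> ` W"] exI[of _ \<phi>] exI[of _ g] exI[of _ P] conjI) auto
qed

lemma pl_embedding_linear: "linear F \<Longrightarrow> inj F \<Longrightarrow> pl_embedding {(0, 0, F)} F"
  by (rule pl_embedding.intro) (auto simp: wedge_def)

lemma locally_pl_linear:
  fixes F :: "real^2 \<Rightarrow> (real^2) \<times> (real^2)"
  assumes "linear F" "inj F" "\<epsilon> > 0" "\<And>z. norm z < \<epsilon> \<Longrightarrow> p + z \<in> T \<longleftrightarrow> z \<in> range F"
  shows "locally_pl T p"
  unfolding locally_pl_def using pl_embedding_linear assms by blast

lemma locally_pl_translate:
  assumes "locally_pl T p" "\<And>z. p + z \<in> T \<longleftrightarrow> p' + z \<in> T" shows "locally_pl T p'"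
  using assms(1) unfolding locally_pl_def by (simp only: assms(2)[symmetric])

lemma locally_pl_plane:
  assumes "\<epsilon> > 0" "\<And>z. norm z < \<epsilon> \<Longrightarrow> p + z \<in> T \<longleftrightarrow> fst z = 0"
  shows "locally_pl T p"
proof (rule locally_pl_linear[where F = "\<lambda>x. (0, x)"])
  show "linear (\<lambda>x::real^2. (0::real^2, x))" by (rule linearI) auto
  show "inj (\<lambda>x::real^2. (0::real^2, x))" by (auto intro!: injI)
  show "p + z \<in> T \<longleftrightarrow> z \<in> range (\<lambda>x. (0, x))" if "norm z < \<epsilon>" for z
    using assms(2)[OF that] by (cases z) auto
qed (rule assms(1))

lemma locally_pl_line_times_line:
  fixes d e :: "real^2"
  assumes "d \<noteq> 0" "e \<noteq> 0" "\<epsilon> > 0"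
    and near: "\<And>z. norm z < \<epsilon> \<Longrightarrow> p + z \<in> T \<longleftrightarrow> (\<exists>s. fst z = s *\<^sub>R d) \<and> (\<exists>t. snd z = t *\<^sub>R e)"
  shows "locally_pl T p"
proof (rule locally_pl_linear[where F = "\<lambda>x. (x$1 *\<^sub>R d, x$2 *\<^sub>R e)"])
  show "linear (\<lambda>x::real^2. (x$1 *\<^sub>R d, x$2 *\<^sub>R e))" by (rule linearI) (auto simp: algebra_simps)
  show "inj (\<lambda>x::real^2. (x$1 *\<^sub>R d, x$2 *\<^sub>R e))"
    using assms(1,2) by (intro injI) (auto simp: scaleR_cancel_right vec_eq_iff forall_2)
  have "z \<in> range (\<lambda>x::real^2. (x$1 *\<^sub>R d, x$2 *\<^sub>R e)) \<longleftrightarrow> (\<exists>s. fst z = s *\<^sub>R d) \<and> (\<exists>t. snd z = t *\<^sub>R e)" for z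
  proof
    assume "(\<exists>s. fst z = s *\<^sub>R d) \<and> (\<exists>t. snd z = t *\<^sub>R e)"
    then obtain s t where "fst z = s *\<^sub>R d" "snd z = t *\<^sub>R e" by blast
    then have "z = (\<lambda>x::real^2. (x$1 *\<^sub>R d, x$2 *\<^sub>R e)) (vector [s, t])" by (simp add: prod_eq_iff)
    then show "z \<in> range (\<lambda>x::real^2. (x$1 *\<^sub>R d, x$2 *\<^sub>R e))" by blast
  qed auto
  then show "p + z \<in> T \<longleftrightarrow> z \<in> range (\<lambda>x::real^2. (x$1 *\<^sub>R d, x$2 *\<^sub>R e))" if "norm z < \<epsilon>" for z
    using near[OF that] by simp
qed (rule assms(3))

definition half_planes_map :: "real^2 \<Rightarrow> real^2 \<Rightarrow> real^2 \<Rightarrow> real^2 \<Rightarrow> (real^2) \<times> (real^2)" where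
  "half_planes_map d e u x = (if 0 \<le> x$2 then (0, x$1 *\<^sub>R e + x$2 *\<^sub>R u) else ((- x$2) *\<^sub>R d, x$1 *\<^sub>R e))"

lemma pl_embedding_half_planes_map:
  assumes d: "d \<noteq> 0" and eu: "det2 e u \<noteq> 0"
  shows "pl_embedding {(vector [0, 1], vector [0, 1], \<lambda>x. (0, x$1 *\<^sub>R e + x$2 *\<^sub>R u)),
      (vector [0, -1], vector [0, -1], \<lambda>x. ((- x$2) *\<^sub>R d, x$1 *\<^sub>R e))} (half_planes_map d e u)"
proof -
  define L1 where "L1 = (\<lambda>x::real^2. (0::real^2, x$1 *\<^sub>R e + x$2 *\<^sub>R u))"
  define L2 where "L2 = (\<lambda>x::real^2. ((- x$2) *\<^sub>R d, x$1 *\<^sub>R e))"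
  have e: "e \<noteq> 0" using eu by auto
  have lin: "linear L1" "linear L2" unfolding L1_def L2_def by (rule linearI; auto simp: algebra_simps)+
  have "x = 0" if "L1 x = 0" for x
  proof -
    have "x$1 *\<^sub>R e + x$2 *\<^sub>R u = 0" using that by (simp add: L1_def zero_prod_def)
    from arg_cong[OF this, of "\<lambda>y. det2 y u"] arg_cong[OF this, of "det2 e"]
    show "x = 0" using eu by (simp add: vec_eq_iff forall_2)
  qed
  then have "inj L1" using lin(1) by (simp add: linear_injective_0)
  moreover have "x = 0" if "L2 x = 0" for x
  proof -
    have "x$2 *\<^sub>R d = 0" "x$1 *\<^sub>R e = 0" using that by (simp_all add: L2_def zero_prod_def)
    then have "x$1 = 0" "x$2 = 0" using d e by simp_all
    then show "x = 0" by (simp add: vec_eq_iff forall_2)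
  qed
  then have "inj L2" using lin(2) by (simp add: linear_injective_0)
  moreover have F: "half_planes_map d e u = (\<lambda>x. if 0 \<le> x$2 then L1 x else L2 x)"
    by (simp add: fun_eq_iff half_planes_map_def L1_def L2_def)
  moreover have "inj (half_planes_map d e u)"
  proof (rule injI)
    fix x y assume eq: "half_planes_map d e u x = half_planes_map d e u y"
    show "x = y"
    proof (cases "x$2 \<ge> 0"; cases "y$2 \<ge> 0")
      assume "x$2 \<ge> 0" "y$2 \<ge> 0" then show ?thesis using eq \<open>inj L1\<close> by (simp add: F inj_eq)
    next
      assume "\<not> x$2 \<ge> 0" "\<not> y$2 \<ge> 0" then show ?thesis using eq \<open>inj L2\<close> by (simp add: F inj_eq)
    qed (use eq d in \<open>auto simp: half_planes_map_def prod_eq_iff\<close>)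
  qed
  moreover have "\<exists>(\<alpha>, \<beta>, L)\<in>{(vector [0, 1], vector [0, 1], L1), (vector [0, -1], vector [0, -1], L2)}.
      x \<in> wedge \<alpha> \<beta>" for x
    by (cases "0 \<le> x$2") (auto simp: wedge_def inner_vector2)
  moreover have "half_planes_map d e u x = L x"
    if "(\<alpha>, \<beta>, L) \<in> {(vector [0, 1], vector [0, 1], L1), (vector [0, -1], vector [0, -1], L2)}"
      "x \<in> wedge \<alpha> \<beta>" for \<alpha> \<beta> L x
    using that by (auto simp: wedge_def inner_vector2 F L1_def L2_def)
  ultimately show ?thesis
    unfolding L1_def[symmetric] L2_def[symmetric] using lin by (intro pl_embedding.intro) auto
qed

lemma range_half_planes_map:
  assumes eu: "det2 e u \<noteq> 0" and \<nu>: "\<nu> \<bullet> e = 0" "\<nu> \<bullet> u = 1"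
  shows "z \<in> range (half_planes_map d e u) \<longleftrightarrow>
    (fst z = 0 \<and> \<nu> \<bullet> snd z \<ge> 0) \<or> (\<exists>s\<ge>0. \<exists>t. fst z = s *\<^sub>R d \<and> snd z = t *\<^sub>R e)"
proof
  assume "z \<in> range (half_planes_map d e u)"
  then obtain x where "z = half_planes_map d e u x" by blast
  then show "(fst z = 0 \<and> \<nu> \<bullet> snd z \<ge> 0) \<or> (\<exists>s\<ge>0. \<exists>t. fst z = s *\<^sub>R d \<and> snd z = t *\<^sub>R e)"
    using \<nu> by (cases "x$2 \<ge> 0") (auto simp: half_planes_map_def inner_add_right intro!: exI[of _ "- x$2"])
next
  assume "(fst z = 0 \<and> \<nu> \<bullet> snd z \<ge> 0) \<or> (\<exists>s\<ge>0. \<exists>t. fst z = s *\<^sub>R d \<and> snd z = t *\<^sub>R e)"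
  then show "z \<in> range (half_planes_map d e u)"
  proof
    assume z: "fst z = 0 \<and> \<nu> \<bullet> snd z \<ge> 0"
    define w where "w = snd z"
    define x :: "real^2" where "x = vector [det2 w u / det2 e u, det2 e w / det2 e u]"
    have "w = x$1 *\<^sub>R e + x$2 *\<^sub>R u"
    proof -
      have "det2 w u * e$i + det2 e w * u$i = det2 e u * w$i" for i
        using exhaust_2[of i] by (auto simp: det2_def algebra_simps)
      then show ?thesis using eu by (simp add: x_def vec_eq_iff field_simps)
    qed
    moreover from this have "x$2 \<ge> 0" using z \<nu> by (simp add: w_def inner_add_right)
    ultimately have "half_planes_map d e u x = z" using z by (simp add: half_planes_map_def prod_eq_iff w_def)
    then show ?thesis by (metis rangeI)
  next
    assume "\<exists>s\<ge>0. \<exists>t. fst z = s *\<^sub>R d \<and> snd z = t *\<^sub>R e"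
    then obtain s t where "s \<ge> 0" "fst z = s *\<^sub>R d" "snd z = t *\<^sub>R e" by blast
    then have "half_planes_map d e u (vector [t, - s]) = z"
      by (cases "s = 0") (auto simp: half_planes_map_def prod_eq_iff)
    then show ?thesis by (metis rangeI)
  qed
qed

lemma locally_pl_half_planes:
  fixes d e u \<nu> :: "real^2"
  assumes "d \<noteq> 0" "det2 e u \<noteq> 0" "\<nu> \<bullet> e = 0" "\<nu> \<bullet> u = 1" "\<epsilon> > 0"
    and near: "\<And>z. norm z < \<epsilon> \<Longrightarrow> p + z \<in> T \<longleftrightarrow>
        (fst z = 0 \<and> \<nu> \<bullet> snd z \<ge> 0) \<or> (\<exists>s\<ge>0. \<exists>t. fst z = s *\<^sub>R d \<and> snd z = t *\<^sub>R e)"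
  shows "locally_pl T p"
proof -
  have "p + z \<in> T \<longleftrightarrow> z \<in> range (half_planes_map d e u)" if "norm z < \<epsilon>" for z
    using near[OF that] range_half_planes_map[OF assms(2-4)] by simp
  then show ?thesis unfolding locally_pl_def using pl_embedding_half_planes_map[OF assms(1,2)] \<open>\<epsilon> > 0\<close>
    by (intro exI conjI) auto
qed

section \<open>The lifted surface and its local structure\<close>

lemma Ints_iff_eq_0_if_abs_less_1: "\<bar>x::real\<bar> < 1 \<Longrightarrow> x \<in> \<int> \<longleftrightarrow> x = 0"
  using Ints_nonzero_abs_less1[of x] by auto

lemma not_Ints_if_between_0_1: "0 < y \<Longrightarrow> y < (1::real) \<Longrightarrow> y \<notin> \<int>"
  by (auto elim!: Ints_cases)

lemma frac_eq_add_1_if_between_neg1_0: "-1 < x \<Longrightarrow> x < 0 \<Longrightarrow> frac x = x + 1"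
  by (subst frac_unique_iff) auto

lemma abs_components_less_if_norm_less:
  "norm (z :: (real^2) \<times> (real^2)) < \<epsilon> \<Longrightarrow> norm (fst z) < \<epsilon> \<and> \<bar>snd z $ 1\<bar> < \<epsilon> \<and> \<bar>snd z $ 2\<bar> < \<epsilon>"
  using norm_snd_le[of "snd z" "fst z"] norm_fst_le[of "fst z" "snd z"] component_le_norm_cart[of "snd z"]
  by (smt (verit) prod.collapse)

abbreviation edge_dir1 :: "real^2" where "edge_dir1 \<equiv> vector [1, 1]"
abbreviation edge_dir2 :: "real^2" where "edge_dir2 \<equiv> vector [-1, 0]"
abbreviation edge_dir3 :: "real^2" where "edge_dir3 \<equiv> vector [0, -1]"

definition edge_dirs :: "real^2 \<Rightarrow> real^2 \<Rightarrow> real^2 \<Rightarrow> bool" where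
  "edge_dirs d1 d2 d3 \<longleftrightarrow> {d1, d2, d3} \<subseteq> {edge_dir1, edge_dir2, edge_dir3} \<and> distinct [d1, d2, d3]"

lemma ray_edge_dir1: "ray edge_dir1 = {q. q$1 = q$2 \<and> q$1 \<ge> 0}"
proof (intro equalityI subsetI)
  fix q :: "real^2" assume "q \<in> {q. q$1 = q$2 \<and> q$1 \<ge> 0}"
  then have "q = q$1 *\<^sub>R edge_dir1" "q$1 \<ge> 0" by (auto simp: vec_eq_iff forall_2)
  then show "q \<in> ray edge_dir1" unfolding ray_def by blast
qed (auto simp: ray_def)

lemma ray_edge_dir2: "ray edge_dir2 = {q. q$2 = 0 \<and> q$1 \<le> 0}"
proof (intro equalityI subsetI)
  fix q :: "real^2" assume "q \<in> {q. q$2 = 0 \<and> q$1 \<le> 0}"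
  then have "q = (- q$1) *\<^sub>R edge_dir2" "- q$1 \<ge> 0" by (auto simp: vec_eq_iff forall_2)
  then show "q \<in> ray edge_dir2" unfolding ray_def by blast
qed (auto simp: ray_def)

lemma ray_edge_dir3: "ray edge_dir3 = {q. q$1 = 0 \<and> q$2 \<le> 0}"
proof (intro equalityI subsetI)
  fix q :: "real^2" assume "q \<in> {q. q$1 = 0 \<and> q$2 \<le> 0}"
  then have "q = (- q$2) *\<^sub>R edge_dir3" "- q$2 \<ge> 0" by (auto simp: vec_eq_iff forall_2)
  then show "q \<in> ray edge_dir3" unfolding ray_def by blast
qed (auto simp: ray_def)

lemma ex_scaleR_edge_dir1_iff: "(\<exists>t. z = t *\<^sub>R edge_dir1) \<longleftrightarrow> z$1 = z$2"
  and ex_scaleR_edge_dir2_iff: "(\<exists>t. z = t *\<^sub>R edge_dir2) \<longleftrightarrow> z$2 = 0"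
  and ex_scaleR_edge_dir3_iff: "(\<exists>t. z = t *\<^sub>R edge_dir3) \<longleftrightarrow> z$1 = 0"
  by (auto simp: vec_eq_iff forall_2 intro: exI[of _ "z$1"] exI[of _ "- z$1"] exI[of _ "- z$2"])

lemma ex_scaleR_basis_iff: "(\<exists>t. w = t *\<^sub>R (vector [1, 0] :: real^2)) \<longleftrightarrow> w$2 = 0"
  "(\<exists>t. w = t *\<^sub>R (vector [0, 1] :: real^2)) \<longleftrightarrow> w$1 = 0"
  by (auto simp: vec_eq_iff forall_2 intro: exI[of _ "w$1"] exI[of _ "w$2"])

lemma edge_dir_nonzero: "d \<in> {edge_dir1, edge_dir2, edge_dir3} \<Longrightarrow> d \<noteq> 0"
  by (auto simp: vec_eq_iff forall_2)

lemma add_in_ray_edge_dir_iff: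
  assumes "d \<in> {edge_dir1, edge_dir2, edge_dir3}" "d' \<in> {edge_dir1, edge_dir2, edge_dir3}"
    and "s > 0" "norm z < s/2"
  shows "s *\<^sub>R d + z \<in> ray d' \<longleftrightarrow> d' = d \<and> (\<exists>t. z = t *\<^sub>R d)"
    and "s *\<^sub>R d + z \<noteq> 0"
proof -
  have z: "\<bar>z$1\<bar> < s/2" "\<bar>z$2\<bar> < s/2"
    using component_le_norm_cart[of z] assms(4) by (meson le_less_trans)+
  have "edge_dir1 \<noteq> edge_dir2" "edge_dir1 \<noteq> edge_dir3" "edge_dir2 \<noteq> edge_dir3"
    by (auto simp: vec_eq_iff forall_2)
  then show "s *\<^sub>R d + z \<in> ray d' \<longleftrightarrow> d' = d \<and> (\<exists>t. z = t *\<^sub>R d)"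
    using assms(1,2) z by (auto simp: ray_edge_dir1 ray_edge_dir2 ray_edge_dir3 ex_scaleR_edge_dir1_iff
        ex_scaleR_edge_dir2_iff ex_scaleR_edge_dir3_iff)
  show "s *\<^sub>R d + z \<noteq> 0" using assms(1) z by (auto simp: vec_eq_iff forall_2)
qed

lemma scaleR_edge_dirs_eq_imp_0:
  assumes "d \<in> {edge_dir1, edge_dir2, edge_dir3}" "d' \<in> {edge_dir1, edge_dir2, edge_dir3}" "d \<noteq> d'"
    and "s \<ge> 0" "s' \<ge> 0" "s *\<^sub>R d = s' *\<^sub>R d'"
  shows "s = 0"
  using assms by (auto simp: vec_eq_iff forall_2)

text \<open>The preimage of the surface under cover_map (v 1) (v 2), with A, B, C the edges D1, D2, D3;
  the last disjunct is the lift of Q.\<close>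
definition model_surface :: "(real^2) set \<Rightarrow> (real^2) set \<Rightarrow> (real^2) set \<Rightarrow> ((real^2) \<times> (real^2)) set" where
  "model_surface A B C = {(q, w). (q \<in> A \<and> w$2 \<in> \<int>) \<or> (q \<in> B \<and> w$1 \<in> \<int>) \<or> (q \<in> C \<and> w$1 - w$2 \<in> \<int>) \<or>
     (q = 0 \<and> frac (w$2) \<le> frac (w$1))}"

lemma model_surface_add_integral_iff:
  assumes "integral_vec n"
  shows "(q, w + n) \<in> model_surface A B C \<longleftrightarrow> (q, w) \<in> model_surface A B C"
proof -
  have n: "n$1 \<in> \<int>" "n$2 \<in> \<int>" "n$1 - n$2 \<in> \<int>" using assms by (auto simp: integral_vec_iff)
  have eq: "w$1 + n$1 - (w$2 + n$2) = (w$1 - w$2) + (n$1 - n$2)" by simp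
  have "w$1 + n$1 - (w$2 + n$2) \<in> \<int> \<longleftrightarrow> w$1 - w$2 \<in> \<int>"
    unfolding eq using n(3) by (rule add_in_Ints_iff_right)
  then show ?thesis using n by (simp add: model_surface_def frac_add_int_right)
qed

lemma locally_pl_on_edge:
  assumes dirs: "d \<in> {edge_dir1, edge_dir2, edge_dir3}" "d' \<in> {edge_dir1, edge_dir2, edge_dir3}"
      "d'' \<in> {edge_dir1, edge_dir2, edge_dir3}" "d \<noteq> d'" "d \<noteq> d''"
    and "s > 0" "e \<noteq> 0"
    and T: "\<And>q w. (q, w) \<in> T \<longleftrightarrow> (q \<in> ray d \<and> P w) \<or> (q \<in> ray d' \<and> P' w) \<or> (q \<in> ray d'' \<and> P'' w) \<or> (q = 0 \<and> R w)"
    and line: "\<And>w. norm w < 1/2 \<Longrightarrow> P (w0 + w) \<longleftrightarrow> (\<exists>t. w = t *\<^sub>R e)"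
  shows "locally_pl T (s *\<^sub>R d, w0)"
proof (rule locally_pl_line_times_line[where \<epsilon> = "min (s/2) (1/2)"])
  show "d \<noteq> 0" using dirs(1) by (rule edge_dir_nonzero)
  show "min (s/2) (1/2) > 0" using \<open>s > 0\<close> by simp
  fix z :: "(real^2) \<times> (real^2)" assume "norm z < min (s/2) (1/2)"
  obtain q w where z: "z = (q, w)" by (cases z)
  have nq: "norm q < s/2" and nw: "norm w < 1/2"
    using \<open>norm z < _\<close> norm_fst_le[of q w] norm_snd_le[of w q] by (auto simp: z)
  have "(s *\<^sub>R d, w0) + z = (s *\<^sub>R d + q, w0 + w)" by (simp add: z)
  then show "(s *\<^sub>R d, w0) + z \<in> T \<longleftrightarrow> (\<exists>s. fst z = s *\<^sub>R d) \<and> (\<exists>t. snd z = t *\<^sub>R e)"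
    using T add_in_ray_edge_dir_iff[OF dirs(1) _ \<open>s > 0\<close> nq] dirs line[OF nw] by (simp add: z)
qed fact

lemma locally_pl_model_surface_off_vertex:
  assumes dirs: "edge_dirs d1 d2 d3" and p: "(q, w0) \<in> model_surface (ray d1) (ray d2) (ray d3)" and "q \<noteq> 0"
  shows "locally_pl (model_surface (ray d1) (ray d2) (ray d3)) (q, w0)"
proof -
  have d: "d1 \<in> {edge_dir1, edge_dir2, edge_dir3}" "d2 \<in> {edge_dir1, edge_dir2, edge_dir3}"
    "d3 \<in> {edge_dir1, edge_dir2, edge_dir3}" "d1 \<noteq> d2" "d1 \<noteq> d3" "d2 \<noteq> d3"
    using dirs by (auto simp: edge_dirs_def)
  have small: "\<bar>w$1\<bar> < 1" "\<bar>w$2\<bar> < 1" "\<bar>w$1 - w$2\<bar> < 1" if "norm w < 1/2" for w :: "real^2"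
    using component_le_norm_cart[of w 1] component_le_norm_cart[of w 2] that by linarith+
  have obtain_s: "\<exists>s>0. q = s *\<^sub>R d" if "q \<in> ray d" for d
    using that \<open>q \<noteq> 0\<close> unfolding ray_def by force
  from p \<open>q \<noteq> 0\<close> consider "q \<in> ray d1" "w0$2 \<in> \<int>" | "q \<in> ray d2" "w0$1 \<in> \<int>" | "q \<in> ray d3" "w0$1 - w0$2 \<in> \<int>"
    by (auto simp: model_surface_def)
  then show ?thesis
  proof cases
    case 1
    then obtain s where "s > 0" "q = s *\<^sub>R d1" using obtain_s by blast
    moreover have "locally_pl (model_surface (ray d1) (ray d2) (ray d3)) (s *\<^sub>R d1, w0)"
    proof (rule locally_pl_on_edge[OF d(1,2,3,4,5) \<open>s > 0\<close>, where e = "vector [1, 0]"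
          and P = "\<lambda>w. w$2 \<in> \<int>" and P' = "\<lambda>w. w$1 \<in> \<int>" and P'' = "\<lambda>w. w$1 - w$2 \<in> \<int>"
          and R = "\<lambda>w. frac (w$2) \<le> frac (w$1)"])
      show "(w0 + w)$2 \<in> \<int> \<longleftrightarrow> (\<exists>t. w = t *\<^sub>R vector [1, 0])" if "norm w < 1/2" for w
        using 1(2) small[OF that] by (simp add: Ints_iff_eq_0_if_abs_less_1 ex_scaleR_basis_iff)
    qed (simp_all add: model_surface_def vec_eq_iff forall_2)
    ultimately show ?thesis by simp
  next
    case 2
    then obtain s where "s > 0" "q = s *\<^sub>R d2" using obtain_s by blast
    moreover have "locally_pl (model_surface (ray d1) (ray d2) (ray d3)) (s *\<^sub>R d2, w0)"
    proof (rule locally_pl_on_edge[OF d(2,1,3) d(4)[symmetric] d(6) \<open>s > 0\<close>, where e = "vector [0, 1]"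
          and P = "\<lambda>w. w$1 \<in> \<int>" and P' = "\<lambda>w. w$2 \<in> \<int>" and P'' = "\<lambda>w. w$1 - w$2 \<in> \<int>"
          and R = "\<lambda>w. frac (w$2) \<le> frac (w$1)"])
      show "(w0 + w)$1 \<in> \<int> \<longleftrightarrow> (\<exists>t. w = t *\<^sub>R vector [0, 1])" if "norm w < 1/2" for w
        using 2(2) small[OF that] by (simp add: Ints_iff_eq_0_if_abs_less_1 ex_scaleR_basis_iff)
    qed (auto simp: model_surface_def vec_eq_iff forall_2)
    ultimately show ?thesis by simp
  next
    case 3
    then obtain s where "s > 0" "q = s *\<^sub>R d3" using obtain_s by blast
    moreover have "locally_pl (model_surface (ray d1) (ray d2) (ray d3)) (s *\<^sub>R d3, w0)"
    proof (rule locally_pl_on_edge[OF d(3,1,2) d(5)[symmetric] d(6)[symmetric] \<open>s > 0\<close>, where e = edge_dir1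
          and P = "\<lambda>w. w$1 - w$2 \<in> \<int>" and P' = "\<lambda>w. w$2 \<in> \<int>" and P'' = "\<lambda>w. w$1 \<in> \<int>"
          and R = "\<lambda>w. frac (w$2) \<le> frac (w$1)"])
      show "(w0 + w)$1 - (w0 + w)$2 \<in> \<int> \<longleftrightarrow> (\<exists>t. w = t *\<^sub>R edge_dir1)" if "norm w < 1/2" for w
      proof -
        have eq: "(w0 + w)$1 - (w0 + w)$2 = (w0$1 - w0$2) + (w$1 - w$2)" by simp
        have "(w0 + w)$1 - (w0 + w)$2 \<in> \<int> \<longleftrightarrow> w$1 - w$2 \<in> \<int>"
          unfolding eq using 3(2) by (rule add_in_Ints_iff_left)
        also have "\<dots> \<longleftrightarrow> w$1 = w$2" using small(3)[OF that] by (simp add: Ints_iff_eq_0_if_abs_less_1)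
        finally show ?thesis by (simp add: ex_scaleR_edge_dir1_iff)
      qed
    qed (auto simp: model_surface_def vec_eq_iff forall_2)
    ultimately show ?thesis by simp
  qed
qed

lemma locally_pl_model_surface_edge1:
  assumes "d1 \<noteq> 0" "0 < a" "a < 1"
  shows "locally_pl (model_surface (ray d1) B C) (0, vector [a, 0])"
proof (rule locally_pl_half_planes[OF \<open>d1 \<noteq> 0\<close>, where e = "vector [1, 0]" and u = "vector [0, 1]"
      and \<nu> = "vector [0, 1]" and \<epsilon> = "min a (1 - a) / 2"])
  fix z :: "(real^2) \<times> (real^2)" assume "norm z < min a (1 - a) / 2"
  obtain q w where z: "z = (q, w)" by (cases z)
  have w: "\<bar>w$1\<bar> < min a (1 - a) / 2" "\<bar>w$2\<bar> < min a (1 - a) / 2"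
    using abs_components_less_if_norm_less[OF \<open>norm z < _\<close>] by (auto simp: z)
  have "a + w$1 \<notin> \<int>" "a + w$1 - w$2 \<notin> \<int>" using w assms by (intro not_Ints_if_between_0_1; auto)+
  moreover have "w$2 \<in> \<int> \<longleftrightarrow> w$2 = 0" using w assms by (intro Ints_iff_eq_0_if_abs_less_1) auto
  moreover have "frac (w$2) \<le> frac (a + w$1) \<longleftrightarrow> 0 \<le> w$2"
    using w assms frac_eq[of "a + w$1"] frac_eq[of "w$2"] frac_eq_add_1_if_between_neg1_0[of "w$2"]
    by (cases "0 \<le> w$2") auto
  ultimately have "(0, vector [a, 0]) + z \<in> model_surface (ray d1) B C \<longleftrightarrow> (q \<in> ray d1 \<and> w$2 = 0) \<or> (q = 0 \<and> 0 \<le> w$2)"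
    by (auto simp: z model_surface_def)
  then show "(0, vector [a, 0]) + z \<in> model_surface (ray d1) B C \<longleftrightarrow>
      (fst z = 0 \<and> 0 \<le> vector [0, 1] \<bullet> snd z) \<or> (\<exists>s\<ge>0. \<exists>t. fst z = s *\<^sub>R d1 \<and> snd z = t *\<^sub>R vector [1, 0])"
    by (auto simp: z inner_vector2 ex_scaleR_basis_iff ray_def)
qed (use assms in \<open>simp_all add: det2_def inner_vector2\<close>)

lemma locally_pl_model_surface_edge2:
  assumes "d2 \<noteq> 0" "0 < b" "b < 1"
  shows "locally_pl (model_surface A (ray d2) C) (0, vector [0, b])"
proof (rule locally_pl_half_planes[OF \<open>d2 \<noteq> 0\<close>, where e = "vector [0, 1]" and u = "vector [-1, 0]"
      and \<nu> = "vector [-1, 0]" and \<epsilon> = "min b (1 - b) / 2"])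
  fix z :: "(real^2) \<times> (real^2)" assume "norm z < min b (1 - b) / 2"
  obtain q w where z: "z = (q, w)" by (cases z)
  have w: "\<bar>w$1\<bar> < min b (1 - b) / 2" "\<bar>w$2\<bar> < min b (1 - b) / 2"
    using abs_components_less_if_norm_less[OF \<open>norm z < _\<close>] by (auto simp: z)
  have "b + w$2 \<notin> \<int>" "b + w$2 - w$1 \<notin> \<int>" using w assms by (intro not_Ints_if_between_0_1; auto)+
  moreover from this(2) have "w$1 - (b + w$2) \<notin> \<int>" by (metis minus_diff_eq minus_in_Ints_iff)
  moreover have "w$1 \<in> \<int> \<longleftrightarrow> w$1 = 0" using w assms by (intro Ints_iff_eq_0_if_abs_less_1) auto
  moreover have "b + w$2 \<le> frac (w$1) \<longleftrightarrow> w$1 < 0"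
    using w assms frac_eq[of "w$1"] frac_eq_add_1_if_between_neg1_0[of "w$1"] by (cases "0 \<le> w$1") auto
  moreover have "frac (b + w$2) = b + w$2" using w assms by (auto simp: frac_eq)
  moreover have "0 \<in> ray d2" by (auto simp: ray_def intro!: exI[of _ 0])
  ultimately have "(0, vector [0, b]) + z \<in> model_surface A (ray d2) C \<longleftrightarrow> (q \<in> ray d2 \<and> w$1 = 0) \<or> (q = 0 \<and> 0 \<le> - w$1)"
    by (auto simp: z model_surface_def)
  then show "(0, vector [0, b]) + z \<in> model_surface A (ray d2) C \<longleftrightarrow>
      (fst z = 0 \<and> 0 \<le> vector [-1, 0] \<bullet> snd z) \<or> (\<exists>s\<ge>0. \<exists>t. fst z = s *\<^sub>R d2 \<and> snd z = t *\<^sub>R vector [0, 1])"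
    by (auto simp: z inner_vector2 ex_scaleR_basis_iff ray_def)
qed (use assms in \<open>simp_all add: det2_def inner_vector2\<close>)

lemma locally_pl_model_surface_edge3:
  assumes "d3 \<noteq> 0" "0 < a" "a < 1"
  shows "locally_pl (model_surface A B (ray d3)) (0, vector [a, a])"
proof (rule locally_pl_half_planes[OF \<open>d3 \<noteq> 0\<close>, where e = edge_dir1 and u = "vector [1, 0]"
      and \<nu> = "vector [1, -1]" and \<epsilon> = "min a (1 - a) / 2"])
  fix z :: "(real^2) \<times> (real^2)" assume "norm z < min a (1 - a) / 2"
  obtain q w where z: "z = (q, w)" by (cases z)
  have w: "\<bar>w$1\<bar> < min a (1 - a) / 2" "\<bar>w$2\<bar> < min a (1 - a) / 2"
    using abs_components_less_if_norm_less[OF \<open>norm z < _\<close>] by (auto simp: z)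
  have "a + w$1 \<notin> \<int>" "a + w$2 \<notin> \<int>" using w assms by (intro not_Ints_if_between_0_1; auto)+
  moreover have "a + w$1 - (a + w$2) \<in> \<int> \<longleftrightarrow> w$1 = w$2"
    using w Ints_iff_eq_0_if_abs_less_1[of "w$1 - w$2"] by auto
  moreover have "frac (a + w$1) = a + w$1" "frac (a + w$2) = a + w$2" using w assms by (auto simp: frac_eq)
  ultimately have "(0, vector [a, a]) + z \<in> model_surface A B (ray d3) \<longleftrightarrow> (q \<in> ray d3 \<and> w$1 = w$2) \<or> (q = 0 \<and> 0 \<le> w$1 - w$2)"
    by (auto simp: z model_surface_def)
  then show "(0, vector [a, a]) + z \<in> model_surface A B (ray d3) \<longleftrightarrow>
      (fst z = 0 \<and> 0 \<le> vector [1, -1] \<bullet> snd z) \<or> (\<exists>s\<ge>0. \<exists>t. fst z = s *\<^sub>R d3 \<and> snd z = t *\<^sub>R edge_dir1)"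
    by (auto simp: z inner_vector2 ex_scaleR_edge_dir1_iff ray_def)
qed (use assms in \<open>simp_all add: det2_def inner_vector2\<close>)

lemma locally_pl_model_surface_interior:
  assumes "0 < b" "b < a" "a < 1"
  shows "locally_pl (model_surface A B C) (0, vector [a, b])"
proof (rule locally_pl_plane[where \<epsilon> = "min (min b (a - b)) (1 - a) / 2"])
  fix z :: "(real^2) \<times> (real^2)" assume "norm z < min (min b (a - b)) (1 - a) / 2"
  obtain q w where z: "z = (q, w)" by (cases z)
  have w: "\<bar>w$1\<bar> < min (min b (a - b)) (1 - a) / 2" "\<bar>w$2\<bar> < min (min b (a - b)) (1 - a) / 2"
    using abs_components_less_if_norm_less[OF \<open>norm z < _\<close>] by (auto simp: z)
  have "a + w$1 \<notin> \<int>" "b + w$2 \<notin> \<int>" "a + w$1 - (b + w$2) \<notin> \<int>"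
    using w assms by (intro not_Ints_if_between_0_1; auto)+
  moreover have "frac (a + w$1) = a + w$1" "frac (b + w$2) = b + w$2" using w assms by (auto simp: frac_eq)
  ultimately show "(0, vector [a, b]) + z \<in> model_surface A B C \<longleftrightarrow> fst z = 0"
    using w by (auto simp: z model_surface_def)
qed (use assms in simp)

lemma scaleR_in_ray: "s \<ge> 0 \<Longrightarrow> s *\<^sub>R d \<in> ray d"
  by (auto simp: ray_def)

lemma ray_eq_0_or_pos: "d \<noteq> 0 \<Longrightarrow> q \<in> ray d \<longleftrightarrow> q = 0 \<or> (\<exists>s>0. q = s *\<^sub>R d)"
  by (auto simp: ray_def)

locale tropical_vertex =
  fixes d1 d2 d3 :: "real^2"
  assumes dirs: "edge_dirs d1 d2 d3"
begin

lemma d_nonzero: "d1 \<noteq> 0" "d2 \<noteq> 0" "d3 \<noteq> 0"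
  using dirs edge_dir_nonzero by (auto simp: edge_dirs_def)

lemma scaleR_d_not_in_ray:
  assumes "s > 0"
  shows "s *\<^sub>R d2 \<notin> ray d1" "s *\<^sub>R d3 \<notin> ray d1" "s *\<^sub>R d3 \<notin> ray d2"
proof -
  have d: "d1 \<in> {edge_dir1, edge_dir2, edge_dir3}" "d2 \<in> {edge_dir1, edge_dir2, edge_dir3}"
    "d3 \<in> {edge_dir1, edge_dir2, edge_dir3}" "d2 \<noteq> d1" "d3 \<noteq> d1" "d3 \<noteq> d2"
    using dirs by (auto simp: edge_dirs_def)
  show "s *\<^sub>R d2 \<notin> ray d1" "s *\<^sub>R d3 \<notin> ray d1" "s *\<^sub>R d3 \<notin> ray d2"
    using scaleR_edge_dirs_eq_imp_0[OF d(2,1,4), of s] scaleR_edge_dirs_eq_imp_0[OF d(3,1,5), of s]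
      scaleR_edge_dirs_eq_imp_0[OF d(3,2,6), of s] assms by (auto simp: ray_def)
qed

text \<open>Near the vertex, the lifted surface consists of three sectors of the w-plane (the lift of Q)
  alternating with the three half-planes ray dj \<times> (a line). The chart maps nine wedges of the
  parameter plane linearly onto the sectors (L1, L4, L7) and onto the quadrants of the
  half-planes (L2, L3 for d3; L5, L6 for d2; L8, L9 for d1).\<close>
definition L1 :: "real^2 \<Rightarrow> (real^2) \<times> (real^2)" where
  "L1 x = (0, vector [x$1, x$2])"
definition L2 :: "real^2 \<Rightarrow> (real^2) \<times> (real^2)" where
  "L2 x = ((x$2 - x$1) *\<^sub>R d3, vector [x$1, x$1])"
definition L3 :: "real^2 \<Rightarrow> (real^2) \<times> (real^2)" where
  "L3 x = ((x$1 + x$2) *\<^sub>R d3, vector [x$1, x$1])"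
definition L4 :: "real^2 \<Rightarrow> (real^2) \<times> (real^2)" where
  "L4 x = (0, vector [- x$2, x$1])"
definition L5 :: "real^2 \<Rightarrow> (real^2) \<times> (real^2)" where
  "L5 x = ((- x$2) *\<^sub>R d2, vector [0, x$1 - x$2])"
definition L6 :: "real^2 \<Rightarrow> (real^2) \<times> (real^2)" where
  "L6 x = ((- x$1) *\<^sub>R d2, vector [0, x$1 - x$2])"
definition L7 :: "real^2 \<Rightarrow> (real^2) \<times> (real^2)" where
  "L7 x = (0, vector [- x$1, -2 * x$1 - x$2])"
definition L8 :: "real^2 \<Rightarrow> (real^2) \<times> (real^2)" where
  "L8 x = ((2 * x$1 + x$2) *\<^sub>R d1, vector [x$1 + x$2, 0])"
definition L9 :: "real^2 \<Rightarrow> (real^2) \<times> (real^2)" where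
  "L9 x = ((- x$2) *\<^sub>R d1, vector [x$1 + x$2, 0])"

lemmas L_defs = L1_def L2_def L3_def L4_def L5_def L6_def L7_def L8_def L9_def

definition vertex_map :: "real^2 \<Rightarrow> (real^2) \<times> (real^2)" where
  "vertex_map x = (let a = x$1; b = x$2 in
     if 0 \<le> a - b \<and> 0 \<le> b then L1 x
     else if 0 \<le> a \<and> 0 \<le> b - a then L2 x
     else if 0 \<le> a + b \<and> 0 \<le> - a then L3 x
     else if 0 \<le> b \<and> 0 \<le> - a - b then L4 x
     else if 0 \<le> b - a \<and> 0 \<le> - b then L5 x
     else if 0 \<le> - a \<and> 0 \<le> a - b then L6 x
     else if 0 \<le> -2 * a - b \<and> 0 \<le> a then L7 x
     else if 0 \<le> - a - b \<and> 0 \<le> 2 * a + b then L8 x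
     else L9 x)"

lemma vertex_wedges_cover:
  fixes x :: "real^2"
  shows "(0 \<le> x$1 - x$2 \<and> 0 \<le> x$2) \<or> (0 \<le> x$1 \<and> 0 \<le> x$2 - x$1) \<or> (0 \<le> x$1 + x$2 \<and> 0 \<le> - x$1) \<or>
    (0 \<le> x$2 \<and> 0 \<le> - x$1 - x$2) \<or> (0 \<le> x$2 - x$1 \<and> 0 \<le> - x$2) \<or> (0 \<le> - x$1 \<and> 0 \<le> x$1 - x$2) \<or>
    (0 \<le> -2 * x$1 - x$2 \<and> 0 \<le> x$1) \<or> (0 \<le> - x$1 - x$2 \<and> 0 \<le> 2 * x$1 + x$2) \<or> (0 \<le> - x$2 \<and> 0 \<le> x$1 + x$2)"
  by linarith

lemma vertex_map_L1: "0 \<le> x$1 - x$2 \<Longrightarrow> 0 \<le> x$2 \<Longrightarrow> vertex_map x = L1 x"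
  by (simp add: vertex_map_def)

lemma vertex_map_L2_to_L8:
  fixes x :: "real^2"
  shows vertex_map_L2: "0 \<le> x$1 \<Longrightarrow> 0 \<le> x$2 - x$1 \<Longrightarrow> vertex_map x = L2 x"
    and vertex_map_L3: "0 \<le> x$1 + x$2 \<Longrightarrow> 0 \<le> - x$1 \<Longrightarrow> vertex_map x = L3 x"
    and vertex_map_L4: "0 \<le> x$2 \<Longrightarrow> 0 \<le> - x$1 - x$2 \<Longrightarrow> vertex_map x = L4 x"
    and vertex_map_L5: "0 \<le> x$2 - x$1 \<Longrightarrow> 0 \<le> - x$2 \<Longrightarrow> vertex_map x = L5 x"
    and vertex_map_L6: "0 \<le> - x$1 \<Longrightarrow> 0 \<le> x$1 - x$2 \<Longrightarrow> vertex_map x = L6 x"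
    and vertex_map_L7: "0 \<le> -2 * x$1 - x$2 \<Longrightarrow> 0 \<le> x$1 \<Longrightarrow> vertex_map x = L7 x"
    and vertex_map_L8: "0 \<le> - x$1 - x$2 \<Longrightarrow> 0 \<le> 2 * x$1 + x$2 \<Longrightarrow> vertex_map x = L8 x"
  using d_nonzero by (auto simp: vertex_map_def Let_def L_defs prod_eq_iff vec_eq_iff forall_2 scaleR_cancel_right)

lemma vertex_map_L9:
  assumes "0 \<le> - x$2" "0 \<le> x$1 + x$2" shows "vertex_map x = L9 x"
proof (cases "0 \<le> - x$1 - x$2 \<and> 0 \<le> 2 * x$1 + x$2")
  case True
  then have e: "2 * x$1 + x$2 = - x$2" using assms by linarith
  have "L8 x = L9 x" unfolding L8_def L9_def e by simp
  then show ?thesis using vertex_map_L8 True by simp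
next
  case False
  then show ?thesis
    using d_nonzero assms by (auto simp: vertex_map_def Let_def L_defs prod_eq_iff vec_eq_iff forall_2 scaleR_cancel_right)
qed

lemmas vertex_map_L = vertex_map_L1 vertex_map_L2_to_L8 vertex_map_L9

definition sector_cone :: "real^2 \<Rightarrow> bool" where
  "sector_cone w \<longleftrightarrow> (0 \<le> w$2 \<and> w$2 \<le> w$1) \<or> (w$1 \<le> 0 \<and> 0 \<le> w$2) \<or> (w$2 \<le> w$1 \<and> w$1 \<le> 0)"

definition vertex_germ :: "(real^2) \<times> (real^2) \<Rightarrow> bool" where
  "vertex_germ z \<longleftrightarrow> (fst z = 0 \<and> sector_cone (snd z)) \<or> (fst z \<in> ray d1 \<and> snd z $ 2 = 0) \<or>
     (fst z \<in> ray d2 \<and> snd z $ 1 = 0) \<or> (fst z \<in> ray d3 \<and> snd z $ 1 = snd z $ 2)"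

lemma vertex_germ_vertex_map: "vertex_germ (vertex_map x)"
  using vertex_wedges_cover[of x]
  by (elim disjE; simp add: vertex_map_L; simp add: vertex_germ_def sector_cone_def L_defs scaleR_in_ray
      del: scaleR_minus_left)

definition sector_inv :: "real^2 \<Rightarrow> real^2" where
  "sector_inv w = (if w$1 \<le> 0 \<and> 0 \<le> w$2 then vector [- w$1, 2 * w$1 - w$2]
     else if w$1 \<le> 0 \<and> w$2 \<le> w$1 then vector [w$2, - w$1] else w)"

definition vertex_map_inv :: "(real^2) \<times> (real^2) \<Rightarrow> real^2" where
  "vertex_map_inv z = (let q = fst z; w = snd z in
     if q = 0 then sector_inv w
     else if q \<in> ray d1 then (let s = (q \<bullet> d1) / (d1 \<bullet> d1); t = w$1 in
       if t \<le> 0 then vector [s - t, 2 * t - s] else vector [s + t, - s])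
     else if q \<in> ray d2 then (let s = (q \<bullet> d2) / (d2 \<bullet> d2); t = w$2 in vector [- s + min t 0, - s - max t 0])
     else (let s = (q \<bullet> d3) / (d3 \<bullet> d3); t = w$1 in vector [t, s + \<bar>t\<bar>]))"

lemma vertex_map_inv_0: "vertex_map_inv (0, w) = sector_inv w"
  by (simp add: vertex_map_inv_def)

lemma vertex_map_inv_on_rays:
  assumes "s \<ge> 0"
  shows "vertex_map_inv (s *\<^sub>R d1, w) = (if s = 0 then sector_inv w
           else if w$1 \<le> 0 then vector [s - w$1, 2 * w$1 - s] else vector [s + w$1, - s])"
    and "vertex_map_inv (s *\<^sub>R d2, w) = (if s = 0 then sector_inv w
           else vector [- s + min (w$2) 0, - s - max (w$2) 0])"
    and "vertex_map_inv (s *\<^sub>R d3, w) = (if s = 0 then sector_inv w else vector [w$1, s + \<bar>w$1\<bar>])"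
proof -
  have "s = 0 \<or> s > 0" using assms by auto
  then show "vertex_map_inv (s *\<^sub>R d1, w) = (if s = 0 then sector_inv w
           else if w$1 \<le> 0 then vector [s - w$1, 2 * w$1 - s] else vector [s + w$1, - s])"
    and "vertex_map_inv (s *\<^sub>R d2, w) = (if s = 0 then sector_inv w
           else vector [- s + min (w$2) 0, - s - max (w$2) 0])"
    and "vertex_map_inv (s *\<^sub>R d3, w) = (if s = 0 then sector_inv w else vector [w$1, s + \<bar>w$1\<bar>])"
    using d_nonzero scaleR_d_not_in_ray[of s] scaleR_in_ray[of s]
    by (auto simp: vertex_map_inv_def Let_def)
qed

lemma vertex_map_inv_L:
  fixes x :: "real^2"
  shows "0 \<le> x$1 - x$2 \<Longrightarrow> 0 \<le> x$2 \<Longrightarrow> vertex_map_inv (L1 x) = x"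
    and "0 \<le> x$1 \<Longrightarrow> 0 \<le> x$2 - x$1 \<Longrightarrow> vertex_map_inv (L2 x) = x"
    and "0 \<le> x$1 + x$2 \<Longrightarrow> 0 \<le> - x$1 \<Longrightarrow> vertex_map_inv (L3 x) = x"
    and "0 \<le> x$2 \<Longrightarrow> 0 \<le> - x$1 - x$2 \<Longrightarrow> vertex_map_inv (L4 x) = x"
    and "0 \<le> x$2 - x$1 \<Longrightarrow> 0 \<le> - x$2 \<Longrightarrow> vertex_map_inv (L5 x) = x"
    and "0 \<le> - x$1 \<Longrightarrow> 0 \<le> x$1 - x$2 \<Longrightarrow> vertex_map_inv (L6 x) = x"
    and "0 \<le> -2 * x$1 - x$2 \<Longrightarrow> 0 \<le> x$1 \<Longrightarrow> vertex_map_inv (L7 x) = x"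
    and "0 \<le> - x$1 - x$2 \<Longrightarrow> 0 \<le> 2 * x$1 + x$2 \<Longrightarrow> vertex_map_inv (L8 x) = x"
    and "0 \<le> - x$2 \<Longrightarrow> 0 \<le> x$1 + x$2 \<Longrightarrow> vertex_map_inv (L9 x) = x"
  by (simp_all add: L_defs vertex_map_inv_0 vertex_map_inv_on_rays sector_inv_def vec_eq_iff forall_2
      del: scaleR_minus_left)

lemma vertex_map_inv_vertex_map: "vertex_map_inv (vertex_map x) = x"
  using vertex_wedges_cover[of x] by (elim disjE; simp add: vertex_map_L vertex_map_inv_L)

lemma inj_vertex_map: "inj vertex_map"
  by (metis vertex_map_inv_vertex_map injI)

lemma vertex_map_sector_inv:
  assumes "sector_cone w" shows "vertex_map (sector_inv w) = (0, w)"
proof -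
  consider "w$1 \<le> 0" "0 \<le> w$2" | "w$1 \<le> 0" "w$2 \<le> w$1" "w$2 < 0" | "0 \<le> w$2" "w$2 \<le> w$1" "0 < w$1"
    using assms unfolding sector_cone_def by linarith
  then show ?thesis
  proof cases
    case 1 then show ?thesis by (simp add: sector_inv_def vertex_map_L7 L7_def vec_eq_iff forall_2)
  next
    case 2 then show ?thesis by (simp add: sector_inv_def vertex_map_L4 L4_def vec_eq_iff forall_2)
  next
    case 3 then show ?thesis by (simp add: sector_inv_def vertex_map_L1 L1_def vec_eq_iff forall_2)
  qed
qed

lemma vertex_map_vertex_map_inv_on_rays:
  assumes "s > 0"
  shows "w$2 = 0 \<Longrightarrow> vertex_map (vertex_map_inv (s *\<^sub>R d1, w)) = (s *\<^sub>R d1, w)"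
    and "w$1 = 0 \<Longrightarrow> vertex_map (vertex_map_inv (s *\<^sub>R d2, w)) = (s *\<^sub>R d2, w)"
    and "w$1 = w$2 \<Longrightarrow> vertex_map (vertex_map_inv (s *\<^sub>R d3, w)) = (s *\<^sub>R d3, w)"
  using assms by (auto simp: vertex_map_inv_on_rays vertex_map_L L_defs vec_eq_iff forall_2 min_def max_def abs_if
      simp del: scaleR_minus_left)

lemma vertex_map_vertex_map_inv:
  assumes "vertex_germ z" shows "vertex_map (vertex_map_inv z) = z"
proof -
  obtain q w where z: "z = (q, w)" by (cases z)
  show ?thesis
  proof (cases "q = 0")
    case True
    then have "sector_cone w" using assms by (auto simp: vertex_germ_def sector_cone_def z)
    then show ?thesis using True by (simp add: z vertex_map_inv_0 vertex_map_sector_inv)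
  next
    case False
    with assms obtain s where "s > 0" "q = s *\<^sub>R d1 \<and> w$2 = 0 \<or> q = s *\<^sub>R d2 \<and> w$1 = 0 \<or> q = s *\<^sub>R d3 \<and> w$1 = w$2"
      by (auto simp: vertex_germ_def z ray_eq_0_or_pos d_nonzero)
    then show ?thesis using vertex_map_vertex_map_inv_on_rays[OF \<open>s > 0\<close>] by (auto simp: z)
  qed
qed

lemma range_vertex_map: "range vertex_map = Collect vertex_germ"
  using vertex_germ_vertex_map vertex_map_vertex_map_inv by (metis (mono_tags) rangeI subsetI subset_antisym
      image_subset_iff mem_Collect_eq)

lemma model_surface_near_vertex_iff:
  assumes "norm z < 1/2"
  shows "(0, 0) + z \<in> model_surface (ray d1) (ray d2) (ray d3) \<longleftrightarrow> vertex_germ z"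
proof -
  obtain q w where z: "z = (q, w)" by (cases z)
  have w: "\<bar>w$1\<bar> < 1/2" "\<bar>w$2\<bar> < 1/2" using abs_components_less_if_norm_less[OF assms] by (auto simp: z)
  have "w$2 \<in> \<int> \<longleftrightarrow> w$2 = 0" "w$1 \<in> \<int> \<longleftrightarrow> w$1 = 0" using w by (auto simp: Ints_iff_eq_0_if_abs_less_1)
  moreover have "w$1 - w$2 \<in> \<int> \<longleftrightarrow> w$1 = w$2" using w Ints_iff_eq_0_if_abs_less_1[of "w$1 - w$2"] by auto
  moreover have "frac (w$2) \<le> frac (w$1) \<or> w$2 = 0 \<or> w$1 = 0 \<or> w$1 = w$2 \<longleftrightarrow> sector_cone w"
    using w frac_eq[of "w$1"] frac_eq[of "w$2"] frac_eq_add_1_if_between_neg1_0[of "w$1"]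
      frac_eq_add_1_if_between_neg1_0[of "w$2"]
    unfolding sector_cone_def by (cases "0 \<le> w$1"; cases "0 \<le> w$2") auto
  moreover have "0 \<in> ray d" for d by (auto simp: ray_def intro!: exI[of _ 0])
  ultimately show ?thesis by (auto simp: z model_surface_def vertex_germ_def)
qed

lemma linear_L: "linear L1" "linear L2" "linear L3" "linear L4" "linear L5" "linear L6" "linear L7" "linear L8" "linear L9"
  by (rule linearI; simp add: L_defs vec_eq_iff forall_2 algebra_simps)+

lemma inj_L: "inj L1" "inj L2" "inj L3" "inj L4" "inj L5" "inj L6" "inj L7" "inj L8" "inj L9"
  using d_nonzero by (intro linear_injective_0[THEN iffD2] linear_L allI impI;
      simp add: L_defs vec_eq_iff forall_2 zero_prod_def; linarith?)+

definition vertex_pieces :: "((real^2) \<times> (real^2) \<times> (real^2 \<Rightarrow> (real^2) \<times> (real^2))) set" where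
  "vertex_pieces = {(vector [1, -1], vector [0, 1], L1), (vector [1, 0], vector [-1, 1], L2),
     (vector [1, 1], vector [-1, 0], L3), (vector [0, 1], vector [-1, -1], L4), (vector [-1, 1], vector [0, -1], L5),
     (vector [-1, 0], vector [1, -1], L6), (vector [-2, -1], vector [1, 0], L7), (vector [-1, -1], vector [2, 1], L8),
     (vector [0, -1], vector [1, 1], L9)}"

lemma pl_embedding_vertex_map: "pl_embedding vertex_pieces vertex_map"
proof (rule pl_embedding.intro)
  show "\<exists>(\<alpha>, \<beta>, L)\<in>vertex_pieces. x \<in> wedge \<alpha> \<beta>" for x
    using vertex_wedges_cover[of x] unfolding vertex_pieces_def by (simp add: wedge_def inner_vector2)
  show "vertex_map x = L x" if "(\<alpha>, \<beta>, L) \<in> vertex_pieces" "x \<in> wedge \<alpha> \<beta>" for \<alpha> \<beta> L x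
    using that unfolding vertex_pieces_def by (auto simp: wedge_def inner_vector2 intro!: vertex_map_L)
qed (use linear_L inj_L inj_vertex_map in \<open>auto simp: vertex_pieces_def\<close>)

lemma locally_pl_vertex: "locally_pl (model_surface (ray d1) (ray d2) (ray d3)) (0, 0)"
  unfolding locally_pl_def using pl_embedding_vertex_map model_surface_near_vertex_iff range_vertex_map
  by (intro exI[of _ vertex_pieces] exI[of _ vertex_map] exI[of _ "1/2"]) auto

end




lemma locally_pl_model_surface_unit_square:
  assumes dirs: "edge_dirs da db dc" and ab: "0 \<le> a" "a < 1" "0 \<le> b" "b < 1"
    and mem: "(0, vector [a, b]) \<in> model_surface (ray da) (ray db) (ray dc)"
  shows "locally_pl (model_surface (ray da) (ray db) (ray dc)) (0, vector [a, b])"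
proof -
  have d: "da \<noteq> 0" "db \<noteq> 0" "dc \<noteq> 0" using dirs edge_dir_nonzero by (auto simp: edge_dirs_def)
  consider "a = 0" "b = 0" | "a = 0" "0 < b" | "0 < a" "b = 0" | "0 < b" "a = b" | "0 < b" "b < a" | "0 < a" "a < b"
    using ab by linarith
  then show ?thesis
  proof cases
    case 1
    interpret tropical_vertex da db dc by unfold_locales (rule dirs)
    have "(vector [0, 0] :: real^2) = 0" by (simp add: vec_eq_iff forall_2)
    then show ?thesis using locally_pl_vertex 1 by simp
  next
    case 2 then show ?thesis using locally_pl_model_surface_edge2[OF d(2), of b] ab by simp
  next
    case 3 then show ?thesis using locally_pl_model_surface_edge1[OF d(1), of a] ab by simp
  next
    case 4 then show ?thesis using locally_pl_model_surface_edge3[OF d(3), of a] ab by simp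
  next
    case 5 then show ?thesis using locally_pl_model_surface_interior[of b a] ab by simp
  next
    case 6
    then have "a \<notin> \<int>" "b \<notin> \<int>" "b - a \<notin> \<int>" using ab by (intro not_Ints_if_between_0_1; simp)+
    moreover from this(3) have "a - b \<notin> \<int>" by (metis minus_diff_eq minus_in_Ints_iff)
    ultimately have "b \<le> a" using mem ab by (auto simp: model_surface_def frac_eq)
    with 6 show ?thesis by simp
  qed
qed

lemma locally_pl_model_surface_on_torus:
  assumes dirs: "edge_dirs da db dc" and p: "(0, w) \<in> model_surface (ray da) (ray db) (ray dc)"
  shows "locally_pl (model_surface (ray da) (ray db) (ray dc)) (0, w)"
proof -
  define n :: "real^2" where "n = vector [of_int \<lfloor>w$1\<rfloor>, of_int \<lfloor>w$2\<rfloor>]"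
  have n: "integral_vec n" by (simp add: n_def integral_vec_iff)
  have w_n: "w - n = vector [frac (w$1), frac (w$2)]" by (simp add: n_def frac_def vec_eq_iff forall_2)
  have shift: "(q, w' + n) \<in> model_surface (ray da) (ray db) (ray dc) \<longleftrightarrow>
      (q, w') \<in> model_surface (ray da) (ray db) (ray dc)" for q w'
    by (rule model_surface_add_integral_iff[OF n])
  have "(0, w - n) \<in> model_surface (ray da) (ray db) (ray dc)" using p shift[of 0 "w - n"] by simp
  then have "locally_pl (model_surface (ray da) (ray db) (ray dc)) (0, w - n)"
    unfolding w_n using dirs frac_lt_1 by (intro locally_pl_model_surface_unit_square) auto
  moreover have "(0, w - n) + z \<in> model_surface (ray da) (ray db) (ray dc) \<longleftrightarrow>
      (0, w) + z \<in> model_surface (ray da) (ray db) (ray dc)" for z :: "(real^2) \<times> (real^2)"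
  proof -
    obtain q w' where z: "z = (q, w')" by (cases z)
    have "(0, w) + z = (q, (w - n + w') + n)" by (simp add: z)
    then show ?thesis using shift[of q "w - n + w'"] by (simp only: z add_Pair add_0)
  qed
  ultimately show ?thesis by (rule locally_pl_translate)
qed

lemma locally_pl_model_surface:
  assumes "edge_dirs da db dc" "p \<in> model_surface (ray da) (ray db) (ray dc)"
  shows "locally_pl (model_surface (ray da) (ray db) (ray dc)) p"
  using assms locally_pl_model_surface_off_vertex locally_pl_model_surface_on_torus
  by (cases p) (metis (full_types))

lemma cover_map_model_surface:
  fixes v :: "nat \<Rightarrow> real^2" and D :: "nat \<Rightarrow> (real^2) set"
  assumes prim: "\<And>j. j \<in> {1,2,3} \<Longrightarrow> primitive_vec (v j)"
    and v3: "v 3 = - (v 1 + v 2)" and det: "det2 (v 1) (v 2) \<noteq> 0"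
  shows "cover_map (v 1) (v 2) ` model_surface (D 1) (D 2) (D 3) =
    (\<Union>j\<in>{1,2,3}. D j \<times> circle_subgroup (v j)) \<union>
    {0} \<times> (torus_map \<circ> from_coords (v 1) (v 2)) ` {w. frac (w$2) \<le> frac (w$1)}"
    (is "cover_map ?a ?b ` ?M = ?\<Sigma>\<^sub>0 \<union> ?Q")
proof (intro equalityI subsetI)
  fix x assume "x \<in> cover_map ?a ?b ` ?M"
  then obtain q w where qw: "(q, w) \<in> ?M" "x = (q, torus_map (from_coords ?a ?b w))"
    by (auto simp: cover_map_def)
  have circle: "torus_map (from_coords ?a ?b w) \<in> circle_subgroup (v j)"
    if "j \<in> {1,2,3}" "det2 (v j) (from_coords ?a ?b w) \<in> \<int>" for j
    using that prim by (intro torus_map_in_circle_subgroup) auto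
  from qw(1) consider "q \<in> D 1" "w$2 \<in> \<int>" | "q \<in> D 2" "w$1 \<in> \<int>" | "q \<in> D 3" "w$1 - w$2 \<in> \<int>"
    | "q = 0" "frac (w$2) \<le> frac (w$1)"
    by (auto simp: model_surface_def)
  then show "x \<in> ?\<Sigma>\<^sub>0 \<union> ?Q"
  proof cases
    case 1 with circle[of 1] show ?thesis using qw(2) det2_from_coords[OF det] by auto
  next
    case 2 with circle[of 2] show ?thesis using qw(2) det2_from_coords[OF det] by auto
  next
    case 3 with circle[of 3] show ?thesis using qw(2) det2_from_coords[OF det] v3 by auto
  qed (use qw(2) in auto)
next
  fix x assume "x \<in> ?\<Sigma>\<^sub>0 \<union> ?Q"
  then consider (circle) j q t where "j \<in> {1,2,3}" "q \<in> D j" "x = (q, torus_map (t *\<^sub>R v j))"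
    | (triangle) w where "frac (w$2) \<le> frac (w$1)" "x = (0, torus_map (from_coords ?a ?b w))"
    by (auto simp: circle_subgroup_def)
  then show "x \<in> cover_map ?a ?b ` ?M"
  proof cases
    case circle
    then have "(q, coords ?a ?b (t *\<^sub>R v j)) \<in> ?M"
      by (auto simp: model_surface_def coords_def v3 det2_commute[of "v 2" "v 1"])
    moreover have "x = cover_map ?a ?b (q, coords ?a ?b (t *\<^sub>R v j))"
      using circle(3) from_coords_coords[OF det, of "t *\<^sub>R v j"] by (simp add: cover_map_def)
    ultimately show ?thesis by blast
  next
    case triangle
    then have "(0, w) \<in> ?M" "x = cover_map ?a ?b (0, w)" by (simp_all add: model_surface_def cover_map_def)
    then show ?thesis by blast
  qed
qed

lemma edges_eq_rays:
  assumes "(D 1, D 2, D 3) \<in> {(edge1, edge2, edge3), (edge2, edge3, edge1), (edge3, edge1, edge2)}"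
  obtains d1 d2 d3 where "D 1 = ray d1" "D 2 = ray d2" "D 3 = ray d3" "edge_dirs d1 d2 d3"
proof -
  have "edge_dir1 \<noteq> edge_dir2" "edge_dir1 \<noteq> edge_dir3" "edge_dir2 \<noteq> edge_dir3"
    by (auto simp: vec_eq_iff forall_2)
  with assms that show ?thesis
    by (auto simp: edge1_def edge2_def edge3_def edge_dirs_def)
qed

theorem lemma7p9:
  fixes v :: "nat \<Rightarrow> real^2" and D :: "nat \<Rightarrow> (real^2) set"
  assumes prim: "\<And>j. j \<in> {1,2,3} \<Longrightarrow> primitive_vec (v j)"
    and spans: "span {v 1, v 2, v 3} = UNIV"
    and sum0: "v 1 + v 2 + v 3 = 0"
    and edges: "(D 1, D 2, D 3) \<in> {(edge1, edge2, edge3), (edge2, edge3, edge1), (edge3, edge1, edge2)}"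
  shows "\<exists>Q \<subseteq> {0::real^2} \<times> torus.
           pw_smooth_surface ((\<Union>j\<in>{1,2,3::nat}. D j \<times> circle_subgroup (v j)) \<union> Q)"
proof -
  have "v 3 = (v 1 + v 2 + v 3) - (v 1 + v 2)" by simp
  then have v3: "v 3 = - (v 1 + v 2)" unfolding sum0 by simp
  have "v 3 \<in> span {v 1, v 2}" unfolding v3 by (intro span_neg span_add span_base) auto
  then have "span {v 1, v 2} = UNIV" using spans span_redundant[of "v 3" "{v 1, v 2}"] by (simp add: insert_commute)
  then have det: "det2 (v 1) (v 2) \<noteq> 0" by (rule det2_neq_0_if_span_UNIV)
  obtain d1 d2 d3 where D: "D 1 = ray d1" "D 2 = ray d2" "D 3 = ray d3" "edge_dirs d1 d2 d3"
    using edges_eq_rays[OF edges] by blast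
  have "integral_vec (v 1)" "integral_vec (v 2)" using prim by (auto simp: primitive_vec_def)
  then have "pw_smooth_surface (cover_map (v 1) (v 2) ` model_surface (D 1) (D 2) (D 3))"
    unfolding D(1-3) using det model_surface_add_integral_iff locally_pl_model_surface[OF D(4)]
    by (intro pw_smooth_surface_cover_map_image) auto
  moreover have "{0} \<times> (torus_map \<circ> from_coords (v 1) (v 2)) ` {w. frac (w$2) \<le> frac (w$1)} \<subseteq> {0} \<times> torus"
    by (auto simp: torus_def)
  ultimately show ?thesis using cover_map_model_surface[OF prim v3 det, of D] by auto
qed

end
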